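(* Let $X_1,X_2,\ldots$ be i.i.d. with mean $0$ and variance $1$, and let $G_n\in\mathscr G_n$ with $|E(G_n)|\to\infty$ satisfy the $\Sigma$-co-degree condition for an infinite matrix $\Sigma=((\sigma_{st}))_{s,t\ge1}$. For $M$ with $b_M>0$ let $V_M:=\bm X_{\infty,M}^\top\Sigma\bm X_{\infty,M}$ and $Q_{1,M}\sim N(0,V_M)$. Then $V_M$ converges in $L^1$, as $M\to\infty$, to some random variable $V=:\bm X_\infty^\top\Sigma\bm X_\infty$, and consequently $Q_{1,M}\to Q_1$ in distribution as $M\to\infty$, where $Q_1\sim N(0,V)$ is a well-defined random variable with finite second moment.
   Context: $\mathscr G_n$: simple undirected graphs on $\{1,\ldots,n\}$ labeled so that degrees satisfy $d_1\ge\cdots\ge d_n$; $A(G_n)=((a_{u,v}))$ adjacency matrix, $E(G_n)$ edge set. $\Sigma$-co-degree condition: for each fixed $s,t\ge1$, $\lim_n\frac{1}{|E(G_n)|}\sum_{v=1}^na_{s,v}a_{v,t}=\sigma_{st}$. Truncation: $a_M=\mathbb E[X_1\mathbf 1\{|X_1|\le M\}]$, $b_M=\operatorname{Var}[X_1\mathbf 1\{|X_1|\le M\}]$, $X_{u,M}:=b_M^{-1/2}(X_u\mathbf 1\{|X_u|\le M\}-a_M)$, $\bm X_{\infty,M}=(X_{1,M},X_{2,M},\ldots)$. $\bm X_{\infty,M}^\top\Sigma\bm X_{\infty,M}$ denotes the $L^1$-limit as $K\to\infty$ of $\sum_{1\le s,t\le K}\sigma_{st}X_{s,M}X_{t,M}$.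 For a nonnegative random variable $A$, $N(0,A)$ is the law of $\sqrt A\,W$ with $W\sim N(0,1)$ independent of $A$. *)

theory Defs
  imports "HOL-Probability.Probability"
begin

definition simple_graph_on :: "nat \<Rightarrow> (nat \<Rightarrow> nat \<Rightarrow> bool) \<Rightarrow> bool" where
  "simple_graph_on n E \<longleftrightarrow>
     (\<forall>u v. E u v \<longrightarrow> u \<in> {1..n} \<and> v \<in> {1..n}) \<and>
     (\<forall>u v. E u v \<longleftrightarrow> E v u) \<and> (\<forall>u. \<not> E u u)"

definition gdeg :: "nat \<Rightarrow> (nat \<Rightarrow> nat \<Rightarrow> bool) \<Rightarrow> nat \<Rightarrow> nat" where
  "gdeg n E u = card {v \<in> {1..n}. E u v}"

definition in_script_G :: "nat \<Rightarrow> (nat \<Rightarrow> nat \<Rightarrow> bool) \<Rightarrow> bool" where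
  "in_script_G n E \<longleftrightarrow> simple_graph_on n E \<and>
     (\<forall>u v. 1 \<le> u \<longrightarrow> u \<le> v \<longrightarrow> v \<le> n \<longrightarrow> gdeg n E v \<le> gdeg n E u)"

definition num_edges :: "nat \<Rightarrow> (nat \<Rightarrow> nat \<Rightarrow> bool) \<Rightarrow> nat" where
  "num_edges n E = card {(u, v). u \<in> {1..n} \<and> v \<in> {1..n} \<and> u < v \<and> E u v}"

definition adj :: "(nat \<Rightarrow> nat \<Rightarrow> bool) \<Rightarrow> nat \<Rightarrow> nat \<Rightarrow> real" where
  "adj E u v = (if E u v then 1 else 0)"

definition codegree_condition ::
  "(nat \<Rightarrow> nat \<Rightarrow> nat \<Rightarrow> bool) \<Rightarrow> (nat \<Rightarrow> nat \<Rightarrow> real) \<Rightarrow> bool" where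
  "codegree_condition G \<sigma> \<longleftrightarrow>
     (\<forall>s t. 1 \<le> s \<longrightarrow> 1 \<le> t \<longrightarrow>
        (\<lambda>n. (\<Sum>v = 1..n. adj (G n) s v * adj (G n) v t) / real (num_edges n (G n)))
          \<longlonglongrightarrow> \<sigma> s t)"

definition trunc_mean :: "'a measure \<Rightarrow> (nat \<Rightarrow> 'a \<Rightarrow> real) \<Rightarrow> real \<Rightarrow> real" where
  "trunc_mean P X M = integral\<^sup>L P (\<lambda>x. X 1 x * indicator {y. \<bar>y\<bar> \<le> M} (X 1 x))"

definition trunc_var :: "'a measure \<Rightarrow> (nat \<Rightarrow> 'a \<Rightarrow> real) \<Rightarrow> real \<Rightarrow> real" where
  "trunc_var P X M = integral\<^sup>L P (\<lambda>x.
      (X 1 x * indicator {y. \<bar>y\<bar> \<le> M} (X 1 x) - trunc_mean P X M)\<^sup>2)"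

definition trunc_std :: "'a measure \<Rightarrow> (nat \<Rightarrow> 'a \<Rightarrow> real) \<Rightarrow> real \<Rightarrow> nat \<Rightarrow> 'a \<Rightarrow> real" where
  "trunc_std P X M u x =
     (X u x * indicator {y. \<bar>y\<bar> \<le> M} (X u x) - trunc_mean P X M) / sqrt (trunc_var P X M)"

definition L1_conv :: "'a measure \<Rightarrow> ('i \<Rightarrow> 'a \<Rightarrow> real) \<Rightarrow> ('a \<Rightarrow> real) \<Rightarrow> 'i filter \<Rightarrow> bool" where
  "L1_conv P f g F \<longleftrightarrow> integrable P g \<and> (\<forall>\<^sub>F i in F. integrable P (f i)) \<and>
     ((\<lambda>i. \<integral>x. \<bar>f i x - g x\<bar> \<partial>P) \<longlongrightarrow> 0) F"

definition quad_partial ::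
  "(nat \<Rightarrow> nat \<Rightarrow> real) \<Rightarrow> (nat \<Rightarrow> 'a \<Rightarrow> real) \<Rightarrow> nat \<Rightarrow> 'a \<Rightarrow> real" where
  "quad_partial \<sigma> Y K x = (\<Sum>s = 1..K. \<Sum>t = 1..K. \<sigma> s t * Y s x * Y t x)"

text \<open>N(0,A): law of sqrt(A) W with W standard normal independent of A.\<close>

definition normal_mix :: "'a measure \<Rightarrow> ('a \<Rightarrow> real) \<Rightarrow> real measure" where
  "normal_mix P A = distr (distr P borel A \<Otimes>\<^sub>M std_normal_distribution) borel
                         (\<lambda>(a, w). sqrt a * w)"

definition weak_conv_at_top :: "(real \<Rightarrow> real measure) \<Rightarrow> real measure \<Rightarrow> bool" where
  "weak_conv_at_top \<mu> \<nu> \<longleftrightarrow>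
     (\<forall>Ms :: nat \<Rightarrow> real. filterlim Ms at_top sequentially \<longrightarrow> weak_conv_m (\<lambda>k. \<mu> (Ms k)) \<nu>)"

end

theory Submission
  imports Defs
begin

(* Write \<phi>_M for the standardised truncation at level M; then \<phi>_M(X_1), \<phi>_M(X_2), ... are bounded,
   centred, i.i.d. and of unit variance.  For two such functions \<phi>, \<psi>, a bilinear sum
   \<Sum> c_st \<phi>(X_s) \<psi>(X_t) splits into its diagonal part, of L1 norm at most \<Sum> |c_ss|, and its
   off-diagonal part, whose terms are orthogonal in L2, of L1 norm at most 2 (\<Sum> c_st\<^sup>2)^(1/2).
   The co-degree limits satisfy 0 \<le> \<sigma>_st \<le> \<sigma>_ss and \<Sum> \<sigma>_ss \<le> 2, so \<Sum> \<sigma>_st\<^sup>2 \<le> (\<Sum> \<sigma>_ss)\<^sup>2 \<le> 4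
   and the partial quadratic forms are Cauchy in L1; as \<sigma> is positive semidefinite, their limit
   V_M is nonnegative.  Applied to \<phi>_M - \<phi>_M', the same estimate gives
   E|V_M - V_M'| \<le> 12 \<parallel>\<phi>_M(X_1) - \<phi>_M'(X_1)\<parallel>_2, which tends to 0 because \<phi>_M(X_1) \<rightarrow> X_1 in L2.
   Finally the characteristic function of N(0, A) is E exp(-t\<^sup>2 A / 2), which is L1-Lipschitz in A,
   so Levy's continuity theorem gives the convergence in distribution, and E Q_1\<^sup>2 = E V. *)

section \<open>L1 convergence\<close>

lemma nn_integral_dist_AE_limit_le:
  fixes f :: "nat \<Rightarrow> 'a \<Rightarrow> real"
  assumes [measurable]: "\<And>i. f i \<in> borel_measurable M" "g \<in> borel_measurable M" "h \<in> borel_measurable M"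
    and lim: "AE x in M. (\<lambda>i. f i x) \<longlonglongrightarrow> g x"
    and bound: "\<forall>\<^sub>F i in sequentially. (\<integral>\<^sup>+x. ennreal \<bar>h x - f i x\<bar> \<partial>M) \<le> e"
  shows "(\<integral>\<^sup>+x. ennreal \<bar>h x - g x\<bar> \<partial>M) \<le> e"
proof -
  have "(\<integral>\<^sup>+x. ennreal \<bar>h x - g x\<bar> \<partial>M) = (\<integral>\<^sup>+x. liminf (\<lambda>i. ennreal \<bar>h x - f i x\<bar>) \<partial>M)"
    using lim
  proof (intro nn_integral_cong_AE, eventually_elim)
    case (elim x)
    have "(\<lambda>i. ennreal \<bar>h x - f i x\<bar>) \<longlonglongrightarrow> ennreal \<bar>h x - g x\<bar>"
      by (intro tendsto_ennrealI tendsto_intros elim)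
    from lim_imp_Liminf[OF sequentially_bot this] show ?case
      by simp
  qed
  also have "\<dots> \<le> liminf (\<lambda>i. \<integral>\<^sup>+x. ennreal \<bar>h x - f i x\<bar> \<partial>M)"
    by (rule nn_integral_liminf) measurable
  also have "\<dots> \<le> e"
    by (rule Liminf_le[OF sequentially_bot bound])
  finally show ?thesis .
qed

lemma L1_conv_Cauchy:
  fixes f :: "nat \<Rightarrow> 'a \<Rightarrow> real"
  assumes int: "\<And>n. integrable M (f n)"
    and Cauchy: "\<And>e. e > 0 \<Longrightarrow> \<exists>N. \<forall>m\<ge>N. \<forall>n\<ge>N. (\<integral>x. \<bar>f m x - f n x\<bar> \<partial>M) < e"
  shows "\<exists>g. L1_conv M f g sequentially"
proof -
  have [measurable]: "f n \<in> borel_measurable M" for n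
    using int by auto
  have "\<exists>N. \<forall>i\<ge>N. \<forall>j\<ge>N. (\<integral>x. norm (f i x - f j x) \<partial>M) < e" if "e > 0" for e
    using Cauchy[OF that] by simp
  then obtain r where "strict_mono r" and AE_Cauchy: "AE x in M. Cauchy (\<lambda>i. f (r i) x)"
    by (rule cauchy_L1_AE_cauchy_subseq[OF int])
  define g where "g x = lim (\<lambda>i. f (r i) x)" for x
  have [measurable]: "g \<in> borel_measurable M"
    unfolding g_def by measurable
  have AE_lim: "AE x in M. (\<lambda>i. f (r i) x) \<longlonglongrightarrow> g x"
    using AE_Cauchy by eventually_elim (simp add: g_def Cauchy_convergent_iff convergent_LIMSEQ_iff)
  have dist_le: "(\<integral>\<^sup>+x. ennreal \<bar>f n x - g x\<bar> \<partial>M) \<le> ennreal e"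
    if N: "\<forall>m\<ge>N. \<forall>n\<ge>N. (\<integral>x. \<bar>f m x - f n x\<bar> \<partial>M) < e" and "N \<le> n" for N n e
  proof (rule nn_integral_dist_AE_limit_le[OF _ _ _ AE_lim])
    show "\<forall>\<^sub>F i in sequentially. (\<integral>\<^sup>+x. ennreal \<bar>f n x - f (r i) x\<bar> \<partial>M) \<le> ennreal e"
      using eventually_ge_at_top[of N]
    proof eventually_elim
      case (elim i)
      then have "N \<le> r i"
        using seq_suble[OF \<open>strict_mono r\<close>, of i] by linarith
      then have "(\<integral>x. \<bar>f n x - f (r i) x\<bar> \<partial>M) \<le> e"
        using N \<open>N \<le> n\<close> by (meson less_imp_le)
      then show ?case
        using int by (subst nn_integral_eq_integral) (auto intro: ennreal_leI)
    qed
  qed measurable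
  obtain N1 where N1: "\<forall>m\<ge>N1. \<forall>n\<ge>N1. (\<integral>x. \<bar>f m x - f n x\<bar> \<partial>M) < 1"
    using Cauchy[of 1] by auto
  have "integrable M (\<lambda>x. f N1 x - g x)"
  proof (rule integrableI_bounded)
    show "(\<integral>\<^sup>+x. ennreal (norm (f N1 x - g x)) \<partial>M) < \<infinity>"
      using dist_le[OF N1 order_refl] by (simp add: order_le_less_trans)
  qed measurable
  from Bochner_Integration.integrable_diff[OF int[of N1] this] have g_int: "integrable M g"
    by simp
  have "(\<lambda>n. \<integral>x. \<bar>f n x - g x\<bar> \<partial>M) \<longlonglongrightarrow> 0"
  proof (rule LIMSEQ_I)
    fix e :: real assume "0 < e"
    then obtain N where N: "\<forall>m\<ge>N. \<forall>n\<ge>N. (\<integral>x. \<bar>f m x - f n x\<bar> \<partial>M) < e / 2"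
      using Cauchy[of "e / 2"] by auto
    have le: "(\<integral>x. \<bar>f n x - g x\<bar> \<partial>M) \<le> e / 2" if "N \<le> n" for n
    proof -
      have "ennreal (\<integral>x. \<bar>f n x - g x\<bar> \<partial>M) = (\<integral>\<^sup>+x. ennreal \<bar>f n x - g x\<bar> \<partial>M)"
        using int[of n] g_int by (intro nn_integral_eq_integral[symmetric]) auto
      with dist_le[OF N that] have "ennreal (\<integral>x. \<bar>f n x - g x\<bar> \<partial>M) \<le> ennreal (e / 2)"
        by simp
      then show ?thesis
        using \<open>0 < e\<close> by simp
    qed
    show "\<exists>N. \<forall>n\<ge>N. norm ((\<integral>x. \<bar>f n x - g x\<bar> \<partial>M) - 0) < e"
    proof (intro exI[of _ N] allI impI)
      fix n assume "N \<le> n"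
      have "0 \<le> (\<integral>x. \<bar>f n x - g x\<bar> \<partial>M)"
        by simp
      with le[OF \<open>N \<le> n\<close>] \<open>0 < e\<close> show "norm ((\<integral>x. \<bar>f n x - g x\<bar> \<partial>M) - 0) < e"
        by simp
    qed
  qed
  then show ?thesis
    unfolding L1_conv_def using int g_int by auto
qed

lemma L1_conv_AE_nonneg:
  assumes conv: "L1_conv M f g F" and "F \<noteq> bot"
    and nonneg: "\<forall>\<^sub>F i in F. AE x in M. 0 \<le> f i x"
  shows "AE x in M. 0 \<le> g x"
proof -
  have g_int: "integrable M g" and lim: "((\<lambda>i. \<integral>x. \<bar>f i x - g x\<bar> \<partial>M) \<longlongrightarrow> 0) F"
    and f_int: "\<forall>\<^sub>F i in F. integrable M (f i)"
    using conv unfolding L1_conv_def by auto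
  have "(\<integral>x. max 0 (- g x) \<partial>M) \<le> 0"
  proof (rule tendsto_le[OF \<open>F \<noteq> bot\<close> lim tendsto_const])
    show "\<forall>\<^sub>F i in F. (\<integral>x. max 0 (- g x) \<partial>M) \<le> (\<integral>x. \<bar>f i x - g x\<bar> \<partial>M)"
      using f_int nonneg
    proof eventually_elim
      case (elim i)
      have "integrable M (\<lambda>x. \<bar>f i x - g x\<bar>)"
        using elim(1) g_int by auto
      then show ?case
        using elim(2) g_int by (intro integral_mono_AE) auto
    qed
  qed
  then have "AE x in M. max 0 (- g x) = 0"
    using integral_nonneg_eq_0_iff_AE[of M "\<lambda>x. max 0 (- g x)"] g_int
    by (simp add: order_antisym)
  then show ?thesis
    by eventually_elim (simp add: max_def split: if_splits)
qed

lemma L1_conv_dist_le: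
  assumes f: "L1_conv M f g F" and h: "L1_conv M h k F" and "F \<noteq> bot"
    and bound: "\<forall>\<^sub>F i in F. (\<integral>x. \<bar>f i x - h i x\<bar> \<partial>M) \<le> d"
  shows "(\<integral>x. \<bar>g x - k x\<bar> \<partial>M) \<le> d"
proof -
  have lim: "((\<lambda>i. (\<integral>x. \<bar>f i x - g x\<bar> \<partial>M) + d + (\<integral>x. \<bar>h i x - k x\<bar> \<partial>M)) \<longlongrightarrow> 0 + d + 0) F"
    using f h unfolding L1_conv_def by (intro tendsto_intros) auto
  have "\<forall>\<^sub>F i in F. (\<integral>x. \<bar>g x - k x\<bar> \<partial>M)
      \<le> (\<integral>x. \<bar>f i x - g x\<bar> \<partial>M) + d + (\<integral>x. \<bar>h i x - k x\<bar> \<partial>M)"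
  proof -
    have g: "integrable M g" and k: "integrable M k"
      using f h unfolding L1_conv_def by auto
    have "\<forall>\<^sub>F i in F. integrable M (f i)" "\<forall>\<^sub>F i in F. integrable M (h i)"
      using f h unfolding L1_conv_def by auto
    with bound show ?thesis
    proof eventually_elim
      case (elim i)
      then have "(\<integral>x. \<bar>g x - k x\<bar> \<partial>M)
          \<le> (\<integral>x. \<bar>f i x - g x\<bar> + \<bar>f i x - h i x\<bar> + \<bar>h i x - k x\<bar> \<partial>M)"
        using g k by (intro integral_mono) auto
      also have "\<dots> = (\<integral>x. \<bar>f i x - g x\<bar> \<partial>M) + (\<integral>x. \<bar>f i x - h i x\<bar> \<partial>M)
          + (\<integral>x. \<bar>h i x - k x\<bar> \<partial>M)"
        using elim g k by simp
      finally show ?case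
        using elim by linarith
    qed
  qed
  from tendsto_le[OF \<open>F \<noteq> bot\<close> lim tendsto_const this] show ?thesis
    by simp
qed

lemma L1_conv_Cauchy_at_top:
  fixes f :: "real \<Rightarrow> 'a \<Rightarrow> real"
  assumes int: "\<And>M. integrable P (f M)"
    and Cauchy: "\<And>e. e > 0 \<Longrightarrow> \<exists>M0. \<forall>M\<ge>M0. \<forall>M'\<ge>M0. (\<integral>x. \<bar>f M x - f M' x\<bar> \<partial>P) < e"
  shows "\<exists>g. L1_conv P f g at_top"
proof -
  have "\<exists>g. L1_conv P (\<lambda>n. f (real n)) g sequentially"
  proof (rule L1_conv_Cauchy[OF int])
    fix e :: real assume "e > 0"
    then obtain M0 where "\<forall>M\<ge>M0. \<forall>M'\<ge>M0. (\<integral>x. \<bar>f M x - f M' x\<bar> \<partial>P) < e"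
      using Cauchy by blast
    then show "\<exists>N. \<forall>m\<ge>N. \<forall>n\<ge>N. (\<integral>x. \<bar>f (real m) x - f (real n) x\<bar> \<partial>P) < e"
      using real_nat_ceiling_ge[of M0] by (intro exI[of _ "nat \<lceil>M0\<rceil>"]) auto
  qed
  then obtain g where g: "L1_conv P (\<lambda>n. f (real n)) g sequentially"
    by blast
  have "((\<lambda>M. \<integral>x. \<bar>f M x - g x\<bar> \<partial>P) \<longlongrightarrow> 0) at_top"
  proof (rule order_tendstoI)
    fix e :: real assume "0 < e"
    then obtain M0 where M0: "\<forall>M\<ge>M0. \<forall>M'\<ge>M0. (\<integral>x. \<bar>f M x - f M' x\<bar> \<partial>P) < e / 2"
      using Cauchy[of "e / 2"] by auto
    have close: "(\<integral>x. \<bar>f M x - g x\<bar> \<partial>P) \<le> e / 2" if "M0 \<le> M" for M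
    proof (rule L1_conv_dist_le[OF _ g])
      show "L1_conv P (\<lambda>n. f M) (f M) sequentially"
        unfolding L1_conv_def using int by simp
      show "\<forall>\<^sub>F n in sequentially. (\<integral>x. \<bar>f M x - f (real n) x\<bar> \<partial>P) \<le> e / 2"
        using eventually_ge_at_top[of "nat \<lceil>M0\<rceil>"]
      proof eventually_elim
        case (elim n)
        then have "M0 \<le> real n"
          using real_nat_ceiling_ge[of M0] by linarith
        then show ?case
          using M0 that by (meson less_imp_le)
      qed
    qed simp
    show "\<forall>\<^sub>F M in at_top. (\<integral>x. \<bar>f M x - g x\<bar> \<partial>P) < e"
      using eventually_ge_at_top[of M0]
    proof (rule eventually_mono)
      fix M assume "M0 \<le> M"
      from close[OF this] \<open>0 < e\<close> show "(\<integral>x. \<bar>f M x - g x\<bar> \<partial>P) < e"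
        by linarith
    qed
  next
    fix e :: real assume "e < 0"
    then show "\<forall>\<^sub>F M in at_top. e < (\<integral>x. \<bar>f M x - g x\<bar> \<partial>P)"
      by (intro always_eventually allI) (simp add: less_le_trans[OF _ integral_nonneg_AE])
  qed
  then show ?thesis
    using g int unfolding L1_conv_def by auto
qed

section \<open>Bilinear sums of i.i.d. variables\<close>

lemma Cauchy_Schwarz_integral:
  fixes f g :: "'a \<Rightarrow> real"
  assumes [measurable]: "f \<in> borel_measurable M" "g \<in> borel_measurable M"
    and f2: "integrable M (\<lambda>x. (f x)\<^sup>2)" and g2: "integrable M (\<lambda>x. (g x)\<^sup>2)"
  shows "(\<integral>x. \<bar>f x * g x\<bar> \<partial>M) \<le> sqrt (\<integral>x. (f x)\<^sup>2 \<partial>M) * sqrt (\<integral>x. (g x)\<^sup>2 \<partial>M)"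
proof -
  have fg: "integrable M (\<lambda>x. f x * g x)"
  proof (rule Bochner_Integration.integrable_bound)
    show "integrable M (\<lambda>x. (f x)\<^sup>2 + (g x)\<^sup>2)"
      using f2 g2 by auto
    show "AE x in M. norm (f x * g x) \<le> norm ((f x)\<^sup>2 + (g x)\<^sup>2)"
    proof (intro AE_I2)
      fix x
      have "2 * \<bar>f x\<bar> * \<bar>g x\<bar> \<le> (f x)\<^sup>2 + (g x)\<^sup>2"
        using sum_squares_bound[of "\<bar>f x\<bar>" "\<bar>g x\<bar>"] by simp
      moreover have "0 \<le> \<bar>f x\<bar> * \<bar>g x\<bar>"
        by simp
      ultimately have "\<bar>f x\<bar> * \<bar>g x\<bar> \<le> (f x)\<^sup>2 + (g x)\<^sup>2"
        by linarith
      then show "norm (f x * g x) \<le> norm ((f x)\<^sup>2 + (g x)\<^sup>2)"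
        by (simp add: abs_mult)
    qed
  qed measurable
  have nn_square: "(\<integral>\<^sup>+x. (ennreal \<bar>h x\<bar>)\<^sup>2 \<partial>M) = ennreal (\<integral>x. (h x)\<^sup>2 \<partial>M)"
    if "integrable M (\<lambda>x. (h x)\<^sup>2)" for h
    using that by (subst nn_integral_eq_integral[symmetric]) (auto simp: ennreal_power)
  have "(\<integral>\<^sup>+x. ennreal \<bar>f x\<bar> * ennreal \<bar>g x\<bar> \<partial>M) = ennreal (\<integral>x. \<bar>f x * g x\<bar> \<partial>M)"
    using integrable_abs[OF fg, unfolded abs_mult]
    by (subst nn_integral_eq_integral[symmetric]) (auto simp: abs_mult ennreal_mult)
  moreover have "(\<integral>\<^sup>+x. ennreal \<bar>f x\<bar> * ennreal \<bar>g x\<bar> \<partial>M)\<^sup>2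
      \<le> (\<integral>\<^sup>+x. (ennreal \<bar>f x\<bar>)\<^sup>2 \<partial>M) * (\<integral>\<^sup>+x. (ennreal \<bar>g x\<bar>)\<^sup>2 \<partial>M)"
    by (rule Cauchy_Schwarz_nn_integral) measurable
  ultimately have "ennreal ((\<integral>x. \<bar>f x * g x\<bar> \<partial>M)\<^sup>2)
      \<le> ennreal ((\<integral>x. (f x)\<^sup>2 \<partial>M) * (\<integral>x. (g x)\<^sup>2 \<partial>M))"
    unfolding nn_square[OF f2] nn_square[OF g2] by (simp add: ennreal_power ennreal_mult)
  then have "(\<integral>x. \<bar>f x * g x\<bar> \<partial>M)\<^sup>2 \<le> (\<integral>x. (f x)\<^sup>2 \<partial>M) * (\<integral>x. (g x)\<^sup>2 \<partial>M)"
    by (simp add: ennreal_le_iff)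
  then show ?thesis
    by (simp add: real_le_rsqrt real_sqrt_mult[symmetric])
qed

lemma (in prob_space) integral_abs_le_sqrt_integral_square:
  fixes f :: "'a \<Rightarrow> real"
  assumes "f \<in> borel_measurable M" and "integrable M (\<lambda>x. (f x)\<^sup>2)"
  shows "(\<integral>x. \<bar>f x\<bar> \<partial>M) \<le> sqrt (\<integral>x. (f x)\<^sup>2 \<partial>M)"
  using Cauchy_Schwarz_integral[OF assms(1) _ assms(2), of "\<lambda>_. 1"] by (simp add: prob_space)

definition bounded_measurable :: "'a measure \<Rightarrow> ('a \<Rightarrow> real) \<Rightarrow> bool" where
  "bounded_measurable M f \<longleftrightarrow> f \<in> borel_measurable M \<and> (\<exists>B. \<forall>x\<in>space M. \<bar>f x\<bar> \<le> B)"

lemma bounded_measurable_imp_measurable: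
  "bounded_measurable M f \<Longrightarrow> f \<in> borel_measurable M"
  by (simp add: bounded_measurable_def)

lemma (in finite_measure) bounded_measurable_imp_integrable:
  "bounded_measurable M f \<Longrightarrow> integrable M f"
  unfolding bounded_measurable_def by (auto intro!: integrable_const_bound AE_I2)

lemma bounded_measurable_const: "bounded_measurable M (\<lambda>x. c)"
  by (auto simp: bounded_measurable_def)

lemma bounded_measurable_add:
  "bounded_measurable M f \<Longrightarrow> bounded_measurable M g \<Longrightarrow> bounded_measurable M (\<lambda>x. f x + g x)"
  unfolding bounded_measurable_def
  by (auto intro!: exI[of _ "_ + _"] abs_triangle_ineq[THEN order_trans] add_mono)

lemma bounded_measurable_diff:
  "bounded_measurable M f \<Longrightarrow> bounded_measurable M g \<Longrightarrow> bounded_measurable M (\<lambda>x. f x - g x)"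
  unfolding bounded_measurable_def
  by (auto intro!: exI[of _ "_ + _"] abs_triangle_ineq4[THEN order_trans] add_mono)

lemma bounded_measurable_mult:
  assumes "bounded_measurable M f" "bounded_measurable M g"
  shows "bounded_measurable M (\<lambda>x. f x * g x)"
proof -
  obtain A B where A: "\<forall>x\<in>space M. \<bar>f x\<bar> \<le> A" and B: "\<forall>x\<in>space M. \<bar>g x\<bar> \<le> B"
    using assms unfolding bounded_measurable_def by auto
  have "\<bar>f x * g x\<bar> \<le> A * B" if "x \<in> space M" for x
    unfolding abs_mult using A B that by (intro mult_mono') auto
  then show ?thesis
    using assms unfolding bounded_measurable_def by auto
qed

lemma bounded_measurable_sum:
  "finite I \<Longrightarrow> (\<And>i. i \<in> I \<Longrightarrow> bounded_measurable M (f i))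
    \<Longrightarrow> bounded_measurable M (\<lambda>x. \<Sum>i\<in>I. f i x)"
  by (induction I rule: finite_induct) (auto intro: bounded_measurable_add bounded_measurable_const)

lemma bounded_measurable_abs: "bounded_measurable M f \<Longrightarrow> bounded_measurable M (\<lambda>x. \<bar>f x\<bar>)"
  unfolding bounded_measurable_def by auto

lemma bounded_measurable_compose:
  "bounded_measurable borel \<phi> \<Longrightarrow> Y \<in> borel_measurable M \<Longrightarrow> bounded_measurable M (\<lambda>x. \<phi> (Y x))"
  unfolding bounded_measurable_def by (auto simp: measurable_compose)

lemmas bounded_measurable_intros = bounded_measurable_const bounded_measurable_add
  bounded_measurable_diff bounded_measurable_mult bounded_measurable_sum bounded_measurable_abs

locale iid_sequence = prob_space P for P :: "'a measure" +
  fixes X :: "nat \<Rightarrow> 'a \<Rightarrow> real"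
  assumes X_measurable[measurable]: "\<And>i. X i \<in> borel_measurable P"
    and X_indep: "indep_vars (\<lambda>_. borel) X {1..}"
    and X_ident: "\<And>i. 1 \<le> i \<Longrightarrow> distr P borel (X i) = distr P borel (X 1)"
begin

lemma integral_X_eq_X1:
  fixes \<phi> :: "real \<Rightarrow> real"
  assumes "1 \<le> i" and [measurable]: "\<phi> \<in> borel_measurable borel"
  shows "(\<integral>x. \<phi> (X i x) \<partial>P) = (\<integral>x. \<phi> (X 1 x) \<partial>P)"
proof -
  have "(\<integral>x. \<phi> (X i x) \<partial>P) = integral\<^sup>L (distr P borel (X i)) \<phi>"
    by (rule Bochner_Integration.integral_distr[symmetric]) auto
  also have "\<dots> = (\<integral>x. \<phi> (X 1 x) \<partial>P)"
    unfolding X_ident[OF \<open>1 \<le> i\<close>] by (rule Bochner_Integration.integral_distr) auto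
  finally show ?thesis .
qed

lemma bounded_measurable_X:
  "bounded_measurable borel \<phi> \<Longrightarrow> bounded_measurable P (\<lambda>x. \<phi> (X i x))"
  by (rule bounded_measurable_compose[OF _ X_measurable])

lemma integrable_X: "bounded_measurable borel \<phi> \<Longrightarrow> integrable P (\<lambda>x. \<phi> (X i x))"
  by (intro bounded_measurable_imp_integrable bounded_measurable_X)

lemma integral_prod4_indep:
  assumes g: "bounded_measurable borel g1" "bounded_measurable borel g2"
      "bounded_measurable borel g3" "bounded_measurable borel g4"
    and i: "1 \<le> i1" "1 \<le> i2" "1 \<le> i3" "1 \<le> i4"
  defines "\<psi> \<equiv> \<lambda>i y. (if i = i1 then g1 y else 1) * (if i = i2 then g2 y else 1) *
                       (if i = i3 then g3 y else 1) * (if i = i4 then g4 y else 1)"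
  shows "(\<integral>x. g1 (X i1 x) * g2 (X i2 x) * g3 (X i3 x) * g4 (X i4 x) \<partial>P)
       = (\<Prod>i\<in>{i1, i2, i3, i4}. \<integral>x. \<psi> i (X i x) \<partial>P)"
proof -
  let ?I = "{i1, i2, i3, i4}"
  have if_bounded: "bounded_measurable borel (\<lambda>y. if b then g y else 1)"
    if "bounded_measurable borel g" for b g
    using that by (cases b) (auto intro: bounded_measurable_const)
  have \<psi>: "bounded_measurable borel (\<psi> i)" for i
    unfolding \<psi>_def by (intro bounded_measurable_mult if_bounded g)
  have "indep_vars (\<lambda>_. borel) (\<lambda>i x. \<psi> i (X i x)) ?I"
    using i \<psi> by (intro indep_vars_compose2[OF indep_vars_subset[OF X_indep]])
      (auto dest: bounded_measurable_imp_measurable)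
  then have "(\<integral>x. (\<Prod>i\<in>?I. \<psi> i (X i x)) \<partial>P) = (\<Prod>i\<in>?I. \<integral>x. \<psi> i (X i x) \<partial>P)"
    by (intro indep_vars_lebesgue_integral) (auto intro: integrable_X \<psi>)
  moreover have "(\<Prod>i\<in>?I. \<psi> i (X i x)) = g1 (X i1 x) * g2 (X i2 x) * g3 (X i3 x) * g4 (X i4 x)" for x
    unfolding \<psi>_def prod.distrib by (simp add: prod.delta)
  ultimately show ?thesis
    by simp
qed

lemma integral_prod4_single_centred:
  assumes g: "bounded_measurable borel g1" "bounded_measurable borel g2"
      "bounded_measurable borel g3" "bounded_measurable borel g4"
    and i: "1 \<le> i1" "1 \<le> i2" "1 \<le> i3" "1 \<le> i4"
    and single: "i1 \<noteq> i2" "i1 \<noteq> i3" "i1 \<noteq> i4"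
    and centred: "(\<integral>x. g1 (X 1 x) \<partial>P) = 0"
  shows "(\<integral>x. g1 (X i1 x) * g2 (X i2 x) * g3 (X i3 x) * g4 (X i4 x) \<partial>P) = 0"
proof -
  have "(\<integral>x. g1 (X i1 x) \<partial>P) = 0"
    using integral_X_eq_X1[OF i(1), of g1] g(1) centred
    by (simp add: bounded_measurable_imp_measurable)
  then show ?thesis
    unfolding integral_prod4_indep[OF g i] using single
    by (intro prod_zero) (auto intro!: bexI[of _ i1])
qed

lemma integral_prod4_two_pairs:
  assumes g: "bounded_measurable borel g" "bounded_measurable borel h"
    and st: "1 \<le> s" "1 \<le> t" "s \<noteq> t"
  shows "(\<integral>x. g (X s x) * h (X t x) * g (X s x) * h (X t x) \<partial>P)
       = (\<integral>x. (g (X 1 x))\<^sup>2 \<partial>P) * (\<integral>x. (h (X 1 x))\<^sup>2 \<partial>P)"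
proof -
  have [measurable]: "g \<in> borel_measurable borel" "h \<in> borel_measurable borel"
    using g by (auto dest: bounded_measurable_imp_measurable)
  have "{s, t, s, t} = {s, t}"
    by auto
  then have "(\<integral>x. g (X s x) * h (X t x) * g (X s x) * h (X t x) \<partial>P)
      = (\<integral>x. (g (X s x))\<^sup>2 \<partial>P) * (\<integral>x. (h (X t x))\<^sup>2 \<partial>P)"
    unfolding integral_prod4_indep[OF g g st(1,2,1,2)] using st by (simp add: power2_eq_square)
  also have "\<dots> = (\<integral>x. (g (X 1 x))\<^sup>2 \<partial>P) * (\<integral>x. (h (X 1 x))\<^sup>2 \<partial>P)"
    using integral_X_eq_X1[OF st(1), of "\<lambda>y. (g y)\<^sup>2"] integral_X_eq_X1[OF st(2), of "\<lambda>y. (h y)\<^sup>2"]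
    by simp
  finally show ?thesis .
qed

text \<open>The reversed pair has to be excluded: it carries the same two indices, and
  E[g(X s) h(X s)] E[g(X t) h(X t)] need not vanish.\<close>

lemma integral_offdiag_product:
  assumes g: "bounded_measurable borel g" "bounded_measurable borel h"
    and centred: "(\<integral>x. g (X 1 x) \<partial>P) = 0" "(\<integral>x. h (X 1 x) \<partial>P) = 0"
    and st: "1 \<le> s" "1 \<le> t" "s \<noteq> t" and st': "1 \<le> s'" "1 \<le> t'" "s' \<noteq> t'"
    and not_reversed: "(s', t') \<noteq> (t, s)"
  shows "(\<integral>x. g (X s x) * h (X t x) * g (X s' x) * h (X t' x) \<partial>P)
       = (if (s', t') = (s, t) then (\<integral>x. (g (X 1 x))\<^sup>2 \<partial>P) * (\<integral>x. (h (X 1 x))\<^sup>2 \<partial>P) else 0)"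
proof (cases "(s', t') = (s, t)")
  case True
  then show ?thesis
    using integral_prod4_two_pairs[OF g st] by simp
next
  case False
  have "(\<integral>x. g (X s x) * h (X t x) * g (X s' x) * h (X t' x) \<partial>P) = 0"
  proof (cases "s \<noteq> s' \<and> s \<noteq> t'")
    case True
    then show ?thesis
      using st st' by (intro integral_prod4_single_centred g centred) auto
  next
    case False': False
    then have "t \<noteq> s'" "t \<noteq> t'"
      using False not_reversed st by auto
    then have "(\<integral>x. h (X t x) * g (X s x) * g (X s' x) * h (X t' x) \<partial>P) = 0"
      using st st' by (intro integral_prod4_single_centred g centred) auto
    then show ?thesis
      by (simp add: ac_simps)
  qed
  then show ?thesis
    unfolding if_not_P[OF False] .
qed

definition bilinear_sum ::
    "(nat \<Rightarrow> nat \<Rightarrow> real) \<Rightarrow> (nat \<times> nat) set \<Rightarrow> (real \<Rightarrow> real) \<Rightarrow> (real \<Rightarrow> real) \<Rightarrow> 'a \<Rightarrow> real"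
  where "bilinear_sum c R g h x = (\<Sum>(s, t)\<in>R. c s t * g (X s x) * h (X t x))"

lemma bounded_measurable_bilinear_sum:
  "finite R \<Longrightarrow> bounded_measurable borel g \<Longrightarrow> bounded_measurable borel h
    \<Longrightarrow> bounded_measurable P (bilinear_sum c R g h)"
  unfolding bilinear_sum_def split_beta
  by (intro bounded_measurable_intros bounded_measurable_X)

lemma integrable_abs_bilinear_sum:
  "finite R \<Longrightarrow> bounded_measurable borel g \<Longrightarrow> bounded_measurable borel h
    \<Longrightarrow> integrable P (\<lambda>x. \<bar>bilinear_sum c R g h x\<bar>)"
  by (intro bounded_measurable_imp_integrable bounded_measurable_abs bounded_measurable_bilinear_sum)

lemma bilinear_sum_union:
  "finite A \<Longrightarrow> finite B \<Longrightarrow> A \<inter> B = {}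
    \<Longrightarrow> bilinear_sum c (A \<union> B) g h x = bilinear_sum c A g h x + bilinear_sum c B g h x"
  unfolding bilinear_sum_def by (rule sum.union_disjoint)

lemma bilinear_sum_diff:
  "finite A \<Longrightarrow> B \<subseteq> A \<Longrightarrow> bilinear_sum c (A - B) g h x = bilinear_sum c A g h x - bilinear_sum c B g h x"
  unfolding bilinear_sum_def by (rule sum_diff)

lemma integral_square_bilinear_sum_offdiag:
  assumes R: "finite R" "\<And>s t. (s, t) \<in> R \<Longrightarrow> 1 \<le> s \<and> 1 \<le> t \<and> s \<noteq> t \<and> (t, s) \<notin> R"
    and g: "bounded_measurable borel g" "bounded_measurable borel h"
    and centred: "(\<integral>x. g (X 1 x) \<partial>P) = 0" "(\<integral>x. h (X 1 x) \<partial>P) = 0"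
  shows "(\<integral>x. (bilinear_sum c R g h x)\<^sup>2 \<partial>P)
       = (\<Sum>(s, t)\<in>R. (c s t)\<^sup>2) * (\<integral>x. (g (X 1 x))\<^sup>2 \<partial>P) * (\<integral>x. (h (X 1 x))\<^sup>2 \<partial>P)"
proof -
  define F where "F p x = (case p of (s, t) \<Rightarrow> c s t * g (X s x) * h (X t x))" for p x
  define E where "E = (\<integral>x. (g (X 1 x))\<^sup>2 \<partial>P) * (\<integral>x. (h (X 1 x))\<^sup>2 \<partial>P)"
  have F_int: "integrable P (\<lambda>x. F p x * F q x)" for p q
    unfolding F_def split_beta
    by (intro bounded_measurable_imp_integrable bounded_measurable_intros bounded_measurable_X g)
  have orth: "(\<integral>x. F p x * F q x \<partial>P) = (if q = p then (case p of (s, t) \<Rightarrow> (c s t)\<^sup>2) * E else 0)"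
    if "p \<in> R" "q \<in> R" for p q
  proof -
    obtain s t where p: "p = (s, t)"
      by (cases p)
    obtain s' t' where q: "q = (s', t')"
      by (cases q)
    have st: "1 \<le> s" "1 \<le> t" "s \<noteq> t" and st': "1 \<le> s'" "1 \<le> t'" "s' \<noteq> t'"
      and "(s', t') \<noteq> (t, s)"
      using R(2) that unfolding p q by auto
    have "F p x * F q x = (c s t * c s' t') * (g (X s x) * h (X t x) * g (X s' x) * h (X t' x))" for x
      unfolding F_def p q by (simp add: mult_ac)
    then have "(\<integral>x. F p x * F q x \<partial>P)
        = (c s t * c s' t') * (\<integral>x. g (X s x) * h (X t x) * g (X s' x) * h (X t' x) \<partial>P)"
      by simp
    also have "\<dots> = (if q = p then (c s t)\<^sup>2 * E else 0)"
      unfolding integral_offdiag_product[OF g centred st st' \<open>(s', t') \<noteq> (t, s)\<close>] E_def p q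
      by (simp add: power2_eq_square)
    finally show ?thesis
      unfolding p by simp
  qed
  have "bilinear_sum c R g h x = (\<Sum>p\<in>R. F p x)" for x
    unfolding bilinear_sum_def F_def by simp
  then have "(\<integral>x. (bilinear_sum c R g h x)\<^sup>2 \<partial>P) = (\<Sum>p\<in>R. \<Sum>q\<in>R. \<integral>x. F p x * F q x \<partial>P)"
    using F_int by (simp add: power2_eq_square sum_product)
  also have "\<dots> = (\<Sum>p\<in>R. (case p of (s, t) \<Rightarrow> (c s t)\<^sup>2) * E)"
    using R(1) by (simp add: orth sum.delta cong: sum.cong)
  finally show ?thesis
    unfolding E_def by (simp add: sum_distrib_right split_beta mult.assoc)
qed

lemma L1_bilinear_sum_offdiag_le:
  assumes R: "finite R" "\<And>s t. (s, t) \<in> R \<Longrightarrow> 1 \<le> s \<and> 1 \<le> t \<and> s \<noteq> t \<and> (t, s) \<notin> R"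
    and g: "bounded_measurable borel g" "bounded_measurable borel h"
    and centred: "(\<integral>x. g (X 1 x) \<partial>P) = 0" "(\<integral>x. h (X 1 x) \<partial>P) = 0"
  shows "(\<integral>x. \<bar>bilinear_sum c R g h x\<bar> \<partial>P)
       \<le> sqrt (\<Sum>(s, t)\<in>R. (c s t)\<^sup>2) * sqrt (\<integral>x. (g (X 1 x))\<^sup>2 \<partial>P) * sqrt (\<integral>x. (h (X 1 x))\<^sup>2 \<partial>P)"
proof -
  have S: "bounded_measurable P (bilinear_sum c R g h)"
    using R(1) g by (rule bounded_measurable_bilinear_sum)
  then have "integrable P (\<lambda>x. (bilinear_sum c R g h x)\<^sup>2)"
    unfolding power2_eq_square by (intro bounded_measurable_imp_integrable bounded_measurable_mult)
  with S have "(\<integral>x. \<bar>bilinear_sum c R g h x\<bar> \<partial>P) \<le> sqrt (\<integral>x. (bilinear_sum c R g h x)\<^sup>2 \<partial>P)"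
    by (intro integral_abs_le_sqrt_integral_square bounded_measurable_imp_measurable)
  also have "\<dots> = sqrt (\<Sum>(s, t)\<in>R. (c s t)\<^sup>2) * sqrt (\<integral>x. (g (X 1 x))\<^sup>2 \<partial>P)
      * sqrt (\<integral>x. (h (X 1 x))\<^sup>2 \<partial>P)"
    using integral_square_bilinear_sum_offdiag[OF R g centred, of c] by (simp add: real_sqrt_mult)
  finally show ?thesis .
qed

lemma L1_bilinear_sum_diag_le:
  assumes R: "finite R" "\<And>s t. (s, t) \<in> R \<Longrightarrow> 1 \<le> s \<and> s = t"
    and g: "bounded_measurable borel g" "bounded_measurable borel h"
  shows "(\<integral>x. \<bar>bilinear_sum c R g h x\<bar> \<partial>P)
       \<le> (\<Sum>(s, t)\<in>R. \<bar>c s t\<bar>) * sqrt (\<integral>x. (g (X 1 x))\<^sup>2 \<partial>P) * sqrt (\<integral>x. (h (X 1 x))\<^sup>2 \<partial>P)"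
proof -
  have [measurable]: "g \<in> borel_measurable borel" "h \<in> borel_measurable borel"
    using g by (auto dest: bounded_measurable_imp_measurable)
  have term_int: "integrable P (\<lambda>x. \<bar>c s t * g (X s x) * h (X t x)\<bar>)" for s t
    by (intro bounded_measurable_imp_integrable bounded_measurable_intros bounded_measurable_X g)
  have square_int: "integrable P (\<lambda>x. (f (X 1 x))\<^sup>2)" if "bounded_measurable borel f" for f
    unfolding power2_eq_square
    by (intro bounded_measurable_imp_integrable bounded_measurable_intros bounded_measurable_X that)
  have term_eq: "(\<integral>x. \<bar>c s t * g (X s x) * h (X t x)\<bar> \<partial>P) = \<bar>c s t\<bar> * (\<integral>x. \<bar>g (X 1 x) * h (X 1 x)\<bar> \<partial>P)"
    if "(s, t) \<in> R" for s t
    using R(2)[OF that] integral_X_eq_X1[of s "\<lambda>y. \<bar>g y * h y\<bar>"] by (simp add: abs_mult mult.assoc)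
  have sum_int: "integrable P (\<lambda>x. \<Sum>(s, t)\<in>R. \<bar>c s t * g (X s x) * h (X t x)\<bar>)"
    unfolding split_beta
    by (intro bounded_measurable_imp_integrable bounded_measurable_intros bounded_measurable_X g R(1))
  have "(\<integral>x. \<bar>bilinear_sum c R g h x\<bar> \<partial>P) \<le> (\<integral>x. (\<Sum>(s, t)\<in>R. \<bar>c s t * g (X s x) * h (X t x)\<bar>) \<partial>P)"
    using sum_int integrable_abs_bilinear_sum[OF R(1) g]
    by (intro integral_mono) (auto simp: bilinear_sum_def split_beta)
  also have "\<dots> = (\<Sum>(s, t)\<in>R. \<integral>x. \<bar>c s t * g (X s x) * h (X t x)\<bar> \<partial>P)"
    unfolding split_beta by (intro Bochner_Integration.integral_sum term_int)
  also have "\<dots> = (\<Sum>(s, t)\<in>R. \<bar>c s t\<bar> * (\<integral>x. \<bar>g (X 1 x) * h (X 1 x)\<bar> \<partial>P))"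
    by (intro sum.cong refl) (auto simp: term_eq split: prod.splits)
  also have "\<dots> = (\<Sum>(s, t)\<in>R. \<bar>c s t\<bar>) * (\<integral>x. \<bar>g (X 1 x) * h (X 1 x)\<bar> \<partial>P)"
    by (simp add: sum_distrib_right split_beta)
  also have "\<dots> \<le> (\<Sum>(s, t)\<in>R. \<bar>c s t\<bar>) * (sqrt (\<integral>x. (g (X 1 x))\<^sup>2 \<partial>P) * sqrt (\<integral>x. (h (X 1 x))\<^sup>2 \<partial>P))"
    by (intro mult_left_mono Cauchy_Schwarz_integral square_int g) (auto simp: split_beta intro: sum_nonneg)
  finally show ?thesis
    by (simp add: mult.assoc)
qed

lemma L1_bilinear_sum_le:
  assumes A: "finite A" "\<And>s t. (s, t) \<in> A \<Longrightarrow> 1 \<le> s \<and> 1 \<le> t"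
    and g: "bounded_measurable borel g" "bounded_measurable borel h"
    and centred: "(\<integral>x. g (X 1 x) \<partial>P) = 0" "(\<integral>x. h (X 1 x) \<partial>P) = 0"
  shows "(\<integral>x. \<bar>bilinear_sum c A g h x\<bar> \<partial>P)
       \<le> ((\<Sum>(s, t)\<in>{(s, t)\<in>A. s = t}. \<bar>c s t\<bar>) + 2 * sqrt (\<Sum>(s, t)\<in>A. (c s t)\<^sup>2))
         * sqrt (\<integral>x. (g (X 1 x))\<^sup>2 \<partial>P) * sqrt (\<integral>x. (h (X 1 x))\<^sup>2 \<partial>P)"
proof -
  define A0 where "A0 = {(s, t)\<in>A. s = t}"
  \<comment> \<open>No pair lies in the same part as its reverse, as orthogonality requires.\<close>
  define A1 where "A1 = {(s, t)\<in>A. s < t}"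
  define A2 where "A2 = {(s, t)\<in>A. t < s}"
  define S where "S B x = bilinear_sum c B g h x" for B x
  define N where "N = sqrt (\<integral>x. (g (X 1 x))\<^sup>2 \<partial>P) * sqrt (\<integral>x. (h (X 1 x))\<^sup>2 \<partial>P)"
  have fin: "finite A0" "finite A1" "finite A2"
    using A(1) unfolding A0_def A1_def A2_def by (auto intro: rev_finite_subset)
  have A_eq: "A = A0 \<union> (A1 \<union> A2)" and "A0 \<inter> (A1 \<union> A2) = {}" "A1 \<inter> A2 = {}"
    unfolding A0_def A1_def A2_def by auto
  then have split: "S A x = S A0 x + (S A1 x + S A2 x)" for x
    unfolding S_def using fin by (subst A_eq) (simp add: bilinear_sum_union)
  have S_int: "integrable P (\<lambda>x. \<bar>S B x\<bar>)" if "finite B" for B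
    unfolding S_def using that g by (rule integrable_abs_bilinear_sum)
  have offdiag: "(\<integral>x. \<bar>S B x\<bar> \<partial>P) \<le> sqrt (\<Sum>(s, t)\<in>A. (c s t)\<^sup>2) * N"
    if "B = A1 \<or> B = A2" for B
  proof -
    have B: "finite B" "B \<subseteq> A" "\<And>s t. (s, t) \<in> B \<Longrightarrow> 1 \<le> s \<and> 1 \<le> t \<and> s \<noteq> t \<and> (t, s) \<notin> B"
      using that fin A(2) unfolding A1_def A2_def by auto
    have "(\<integral>x. \<bar>S B x\<bar> \<partial>P) \<le> sqrt (\<Sum>(s, t)\<in>B. (c s t)\<^sup>2) * N"
      unfolding S_def N_def mult.assoc[symmetric]
      using L1_bilinear_sum_offdiag_le[OF B(1,3) g centred] .
    also have "\<dots> \<le> sqrt (\<Sum>(s, t)\<in>A. (c s t)\<^sup>2) * N"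
      unfolding N_def using A(1) B(2)
      by (intro mult_right_mono real_sqrt_le_mono sum_mono2) (auto simp: split_beta)
    finally show ?thesis .
  qed
  have diag: "(\<integral>x. \<bar>S A0 x\<bar> \<partial>P) \<le> (\<Sum>(s, t)\<in>A0. \<bar>c s t\<bar>) * N"
    unfolding S_def N_def mult.assoc[symmetric] using fin A(2)
    by (intro L1_bilinear_sum_diag_le g) (auto simp: A0_def)
  have "(\<integral>x. \<bar>S A x\<bar> \<partial>P) \<le> (\<integral>x. \<bar>S A0 x\<bar> + (\<bar>S A1 x\<bar> + \<bar>S A2 x\<bar>) \<partial>P)"
    using fin by (intro integral_mono S_int A(1) Bochner_Integration.integrable_add) (auto simp: split)
  also have "\<dots> = (\<integral>x. \<bar>S A0 x\<bar> \<partial>P) + ((\<integral>x. \<bar>S A1 x\<bar> \<partial>P) + (\<integral>x. \<bar>S A2 x\<bar> \<partial>P))"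
    using fin S_int by simp
  also have "\<dots> \<le> (\<Sum>(s, t)\<in>A0. \<bar>c s t\<bar>) * N + (sqrt (\<Sum>(s, t)\<in>A. (c s t)\<^sup>2) * N + sqrt (\<Sum>(s, t)\<in>A. (c s t)\<^sup>2) * N)"
    using diag offdiag by (intro add_mono) auto
  finally show ?thesis
    unfolding S_def N_def A0_def by (simp add: algebra_simps)
qed

end

section \<open>Co-degree limits\<close>

lemma sum_adj_eq_twice_num_edges:
  assumes "simple_graph_on n E"
  shows "(\<Sum>u = 1..n. \<Sum>v = 1..n. adj E u v) = 2 * real (num_edges n E)"
proof -
  define L where "L = {(u, v). u \<in> {1..n} \<and> v \<in> {1..n} \<and> u < v \<and> E u v}"
  define U where "U = {(u, v). u \<in> {1..n} \<and> v \<in> {1..n} \<and> v < u \<and> E u v}"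
  have fin: "finite L" "finite U"
    unfolding L_def U_def by (auto intro: rev_finite_subset[of "{1..n} \<times> {1..n}"])
  have irrefl: "\<not> E u u" and sym: "E u v \<longleftrightarrow> E v u" for u v
    using assms unfolding simple_graph_on_def by auto
  have edges: "{p \<in> {1..n} \<times> {1..n}. E (fst p) (snd p)} = L \<union> U"
    unfolding L_def U_def using irrefl by (auto simp: neq_iff) (metis linorder_neqE_nat)
  have "U = (\<lambda>(u, v). (v, u)) ` L" and "inj_on (\<lambda>(u, v). (v, u)) L"
    unfolding U_def L_def using sym by (auto simp: image_iff inj_on_def)
  then have "card U = card L"
    by (simp add: card_image)
  moreover have "L \<inter> U = {}"
    unfolding L_def U_def by auto
  ultimately have card_edges: "card (L \<union> U) = 2 * card L"
    using card_Un_disjoint[OF fin] by simp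
  have "(\<Sum>u = 1..n. \<Sum>v = 1..n. adj E u v) = (\<Sum>p\<in>{1..n} \<times> {1..n}. adj E (fst p) (snd p))"
    by (simp add: sum.cartesian_product split_beta)
  also have "\<dots> = real (card {p \<in> {1..n} \<times> {1..n}. E (fst p) (snd p)})"
    unfolding adj_def by (simp add: sum.If_cases Int_def)
  finally have "(\<Sum>u = 1..n. \<Sum>v = 1..n. adj E u v) = real (card (L \<union> U))"
    unfolding edges .
  then show ?thesis
    unfolding num_edges_def L_def[symmetric] using card_edges by simp
qed

locale graph_sequence =
  fixes G :: "nat \<Rightarrow> nat \<Rightarrow> nat \<Rightarrow> bool" and \<sigma> :: "nat \<Rightarrow> nat \<Rightarrow> real"
  assumes graphs: "\<And>n. in_script_G n (G n)"
    and codegree: "codegree_condition G \<sigma>"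
begin

definition codeg :: "nat \<Rightarrow> nat \<Rightarrow> nat \<Rightarrow> real" where
  "codeg n s t = (\<Sum>v = 1..n. adj (G n) s v * adj (G n) v t)"

abbreviation edges :: "nat \<Rightarrow> real" where
  "edges n \<equiv> real (num_edges n (G n))"

lemma simple_graph: "simple_graph_on n (G n)"
  using graphs[of n] unfolding in_script_G_def by auto

lemma edge_sym: "G n u v \<longleftrightarrow> G n v u"
  using simple_graph[of n] unfolding simple_graph_on_def by auto

lemma adj_sym: "adj (G n) u v = adj (G n) v u"
  unfolding adj_def using edge_sym by simp

lemma adj_outside: "s \<notin> {1..n} \<Longrightarrow> adj (G n) s v = 0"
  using simple_graph[of n] unfolding simple_graph_on_def adj_def by auto

lemma codeg_tendsto: "1 \<le> s \<Longrightarrow> 1 \<le> t \<Longrightarrow> (\<lambda>n. codeg n s t / edges n) \<longlonglongrightarrow> \<sigma> s t"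
  using codegree unfolding codegree_condition_def codeg_def by auto

lemma codeg_nonneg: "0 \<le> codeg n s t"
  unfolding codeg_def adj_def by (auto intro: sum_nonneg)

lemma codeg_diag: "codeg n s s = (\<Sum>v = 1..n. adj (G n) s v)"
  unfolding codeg_def by (intro sum.cong refl) (auto simp: adj_def edge_sym)

lemma codeg_le_diag: "codeg n s t \<le> codeg n s s"
  unfolding codeg_diag unfolding codeg_def by (intro sum_mono) (auto simp: adj_def)

lemma sigma_sym: "1 \<le> s \<Longrightarrow> 1 \<le> t \<Longrightarrow> \<sigma> s t = \<sigma> t s"
  using codeg_tendsto[of s t] codeg_tendsto[of t s]
  unfolding codeg_def by (simp add: adj_sym mult.commute LIMSEQ_unique)

lemma sigma_nonneg: "1 \<le> s \<Longrightarrow> 1 \<le> t \<Longrightarrow> 0 \<le> \<sigma> s t"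
  by (rule LIMSEQ_le_const[OF codeg_tendsto]) (auto intro!: divide_nonneg_nonneg codeg_nonneg)

lemma sigma_le_diag: "1 \<le> s \<Longrightarrow> 1 \<le> t \<Longrightarrow> \<sigma> s t \<le> \<sigma> s s"
  by (rule LIMSEQ_le[OF codeg_tendsto codeg_tendsto]) (auto intro!: divide_right_mono codeg_le_diag)

text \<open>The diagonal entries are limits of normalised degrees, which sum to 2.\<close>

lemma sigma_trace_le_2: "(\<Sum>s = 1..K. \<sigma> s s) \<le> 2"
proof (rule LIMSEQ_le_const2)
  show "(\<lambda>n. \<Sum>s = 1..K. codeg n s s / edges n) \<longlonglongrightarrow> (\<Sum>s = 1..K. \<sigma> s s)"
    by (intro tendsto_sum codeg_tendsto) auto
  show "\<exists>N. \<forall>n\<ge>N. (\<Sum>s = 1..K. codeg n s s / edges n) \<le> 2"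
  proof (intro exI allI impI)
    fix n
    have out: "codeg n s s = 0" if "s \<notin> {1..n}" for s
      unfolding codeg_diag using adj_outside[OF that] by simp
    have "(\<Sum>s = 1..K. codeg n s s) \<le> (\<Sum>s \<in> {1..K} \<union> {1..n}. codeg n s s)"
      by (intro sum_mono2 codeg_nonneg) auto
    also have "\<dots> = (\<Sum>s = 1..n. codeg n s s)"
      using out by (intro sum.mono_neutral_right) auto
    also have "\<dots> = 2 * edges n"
      unfolding codeg_diag by (rule sum_adj_eq_twice_num_edges[OF simple_graph])
    finally have "(\<Sum>s = 1..K. codeg n s s) \<le> 2 * edges n" .
    then show "(\<Sum>s = 1..K. codeg n s s / edges n) \<le> 2"
      by (cases "edges n = 0") (auto simp: sum_divide_distrib[symmetric] divide_le_eq)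
  qed
qed

text \<open>Each normalised co-degree matrix is a Gram matrix: its quadratic form at y is
  the sum over v of the squares of the sums of y over the neighbours of v.\<close>

lemma sigma_psd: "0 \<le> (\<Sum>s = 1..K. \<Sum>t = 1..K. \<sigma> s t * y s * y t)"
proof (rule LIMSEQ_le_const)
  show "(\<lambda>n. \<Sum>s = 1..K. \<Sum>t = 1..K. codeg n s t / edges n * y s * y t)
      \<longlonglongrightarrow> (\<Sum>s = 1..K. \<Sum>t = 1..K. \<sigma> s t * y s * y t)"
    by (intro tendsto_sum tendsto_mult_right codeg_tendsto) auto
  show "\<exists>N. \<forall>n\<ge>N. 0 \<le> (\<Sum>s = 1..K. \<Sum>t = 1..K. codeg n s t / edges n * y s * y t)"
  proof (intro exI allI impI)
    fix n
    let ?a = "\<lambda>v s. adj (G n) v s * y s"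
    have "(\<Sum>s = 1..K. \<Sum>t = 1..K. codeg n s t * y s * y t)
        = (\<Sum>s = 1..K. \<Sum>t = 1..K. \<Sum>v = 1..n. ?a v s * ?a v t)"
      unfolding codeg_def sum_distrib_right by (simp add: adj_sym[of n s for s] mult_ac)
    also have "\<dots> = (\<Sum>s = 1..K. \<Sum>v = 1..n. \<Sum>t = 1..K. ?a v s * ?a v t)"
      by (simp only: sum.swap[of _ "{1..K}" "{1..n}"])
    also have "\<dots> = (\<Sum>v = 1..n. \<Sum>s = 1..K. \<Sum>t = 1..K. ?a v s * ?a v t)"
      by (rule sum.swap)
    also have "\<dots> = (\<Sum>v = 1..n. (\<Sum>s = 1..K. ?a v s) * (\<Sum>t = 1..K. ?a v t))"
      by (simp add: sum_product)
    also have "\<dots> \<ge> 0"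
      by (intro sum_nonneg) (simp add: zero_le_square)
    finally have "0 \<le> (\<Sum>s = 1..K. \<Sum>t = 1..K. codeg n s t * y s * y t) / edges n"
      by simp
    then show "0 \<le> (\<Sum>s = 1..K. \<Sum>t = 1..K. codeg n s t / edges n * y s * y t)"
      by (simp add: sum_divide_distrib)
  qed
qed

end

section \<open>Partial quadratic forms\<close>

locale iid_quadratic_form = iid_sequence P X for P :: "'a measure" and X +
  fixes \<sigma> :: "nat \<Rightarrow> nat \<Rightarrow> real"
  assumes sigma_sym: "\<And>s t. 1 \<le> s \<Longrightarrow> 1 \<le> t \<Longrightarrow> \<sigma> s t = \<sigma> t s"
    and sigma_nonneg: "\<And>s t. 1 \<le> s \<Longrightarrow> 1 \<le> t \<Longrightarrow> 0 \<le> \<sigma> s t"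
    and sigma_le_diag: "\<And>s t. 1 \<le> s \<Longrightarrow> 1 \<le> t \<Longrightarrow> \<sigma> s t \<le> \<sigma> s s"
    and sigma_trace_le_2: "\<And>K. (\<Sum>s = 1..K. \<sigma> s s) \<le> 2"
    and sigma_psd: "\<And>K y. 0 \<le> (\<Sum>s = 1..K. \<Sum>t = 1..K. \<sigma> s t * y s * y t)"
begin

abbreviation quad_form :: "(real \<Rightarrow> real) \<Rightarrow> nat \<Rightarrow> 'a \<Rightarrow> real" where
  "quad_form \<phi> \<equiv> quad_partial \<sigma> (\<lambda>s x. \<phi> (X s x))"

definition partial_trace :: "nat \<Rightarrow> real" where
  "partial_trace K = (\<Sum>s = 1..K. \<sigma> s s)"

definition partial_sq_sum :: "nat \<Rightarrow> real" where
  "partial_sq_sum K = (\<Sum>(s, t)\<in>{1..K} \<times> {1..K}. (\<sigma> s t)\<^sup>2)"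

definition standardised :: "(real \<Rightarrow> real) \<Rightarrow> bool" where
  "standardised \<phi> \<longleftrightarrow> bounded_measurable borel \<phi>
     \<and> (\<integral>x. \<phi> (X 1 x) \<partial>P) = 0 \<and> (\<integral>x. (\<phi> (X 1 x))\<^sup>2 \<partial>P) = 1"

lemma quad_form_eq_bilinear_sum: "quad_form \<phi> K x = bilinear_sum \<sigma> ({1..K} \<times> {1..K}) \<phi> \<phi> x"
  unfolding quad_partial_def bilinear_sum_def by (simp add: sum.cartesian_product)

lemma quad_form_nonneg: "0 \<le> quad_form \<phi> K x"
  unfolding quad_partial_def using sigma_psd[where K=K and y="\<lambda>s. \<phi> (X s x)"] by (simp add: mult.assoc)

lemma integrable_quad_form: "bounded_measurable borel \<phi> \<Longrightarrow> integrable P (quad_form \<phi> K)"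
  unfolding quad_form_eq_bilinear_sum[abs_def]
  by (intro bounded_measurable_imp_integrable bounded_measurable_bilinear_sum) auto

lemma partial_trace_mono: "K \<le> L \<Longrightarrow> partial_trace K \<le> partial_trace L"
  unfolding partial_trace_def by (intro sum_mono2) (auto intro: sigma_nonneg)

lemma partial_trace_nonneg: "0 \<le> partial_trace K"
  unfolding partial_trace_def by (intro sum_nonneg sigma_nonneg) auto

lemma partial_trace_le_2: "partial_trace K \<le> 2"
  unfolding partial_trace_def by (rule sigma_trace_le_2)

lemma partial_sq_sum_mono: "K \<le> L \<Longrightarrow> partial_sq_sum K \<le> partial_sq_sum L"
  unfolding partial_sq_sum_def by (intro sum_mono2) auto

lemma partial_sq_sum_le_4: "partial_sq_sum K \<le> 4"
proof -
  have "(\<sigma> s t)\<^sup>2 \<le> \<sigma> s s * \<sigma> t t" if "1 \<le> s" "1 \<le> t" for s t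
  proof -
    have "(\<sigma> s t)\<^sup>2 = \<sigma> s t * \<sigma> t s"
      using sigma_sym[OF that] by (simp add: power2_eq_square)
    also have "\<dots> \<le> \<sigma> s s * \<sigma> t t"
      using that by (intro mult_mono sigma_le_diag sigma_nonneg) auto
    finally show ?thesis .
  qed
  then have "partial_sq_sum K \<le> (\<Sum>(s, t)\<in>{1..K} \<times> {1..K}. \<sigma> s s * \<sigma> t t)"
    unfolding partial_sq_sum_def by (intro sum_mono) auto
  also have "\<dots> = partial_trace K * partial_trace K"
    unfolding partial_trace_def by (simp add: sum_product sum.cartesian_product)
  also have "\<dots> \<le> 2 * 2"
    by (intro mult_mono partial_trace_le_2 partial_trace_nonneg) simp_all
  finally show ?thesis
    by simp
qed

lemma partial_sq_sum_nonneg: "0 \<le> partial_sq_sum K"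
  unfolding partial_sq_sum_def by (auto intro: sum_nonneg)

lemma partial_trace_Cauchy: "Cauchy partial_trace"
proof (intro convergent_Cauchy Bseq_mono_convergent)
  show "Bseq partial_trace"
    by (intro BseqI'[of _ 2]) (simp add: abs_of_nonneg partial_trace_nonneg partial_trace_le_2)
  show "\<forall>m n. m \<le> n \<longrightarrow> partial_trace m \<le> partial_trace n"
    using partial_trace_mono by blast
qed

lemma partial_sq_sum_Cauchy: "Cauchy partial_sq_sum"
proof (intro convergent_Cauchy Bseq_mono_convergent)
  show "Bseq partial_sq_sum"
    by (intro BseqI'[of _ 4]) (simp add: abs_of_nonneg partial_sq_sum_nonneg partial_sq_sum_le_4)
  show "\<forall>m n. m \<le> n \<longrightarrow> partial_sq_sum m \<le> partial_sq_sum n"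
    using partial_sq_sum_mono by blast
qed

lemma block_diag_abs_sum:
  assumes "K \<le> L"
  shows "(\<Sum>(s, t)\<in>{(s, t)\<in>{1..L} \<times> {1..L} - {1..K} \<times> {1..K}. s = t}. \<bar>\<sigma> s t\<bar>)
       = partial_trace L - partial_trace K"
proof -
  have "{(s, t)\<in>{1..L} \<times> {1..L} - {1..K} \<times> {1..K}. s = t} = (\<lambda>s. (s, s)) ` ({1..L} - {1..K})"
    by auto
  then have "(\<Sum>(s, t)\<in>{(s, t)\<in>{1..L} \<times> {1..L} - {1..K} \<times> {1..K}. s = t}. \<bar>\<sigma> s t\<bar>)
      = (\<Sum>s\<in>{1..L} - {1..K}. \<sigma> s s)"
    by (simp add: sum.reindex inj_on_def abs_of_nonneg sigma_nonneg)
  also have "\<dots> = partial_trace L - partial_trace K"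
    unfolding partial_trace_def using assms by (simp add: sum_diff)
  finally show ?thesis .
qed

lemma square_subset: "(K :: nat) \<le> L \<Longrightarrow> {1..K} \<times> {1..K} \<subseteq> {1..L} \<times> {1..L}"
  by auto

lemma block_sq_sum:
  "K \<le> L \<Longrightarrow> (\<Sum>(s, t)\<in>{1..L} \<times> {1..L} - {1..K} \<times> {1..K}. (\<sigma> s t)\<^sup>2)
     = partial_sq_sum L - partial_sq_sum K"
  unfolding partial_sq_sum_def using square_subset by (simp add: sum_diff)

lemma L1_bilinear_sum_block_le:
  assumes "K \<le> L"
    and g: "bounded_measurable borel g" "bounded_measurable borel h"
    and centred: "(\<integral>x. g (X 1 x) \<partial>P) = 0" "(\<integral>x. h (X 1 x) \<partial>P) = 0"
  shows "(\<integral>x. \<bar>bilinear_sum \<sigma> ({1..L} \<times> {1..L} - {1..K} \<times> {1..K}) g h x\<bar> \<partial>P)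
       \<le> (partial_trace L - partial_trace K + 2 * sqrt (partial_sq_sum L - partial_sq_sum K))
         * sqrt (\<integral>x. (g (X 1 x))\<^sup>2 \<partial>P) * sqrt (\<integral>x. (h (X 1 x))\<^sup>2 \<partial>P)"
  using L1_bilinear_sum_le[OF _ _ g centred, of "{1..L} \<times> {1..L} - {1..K} \<times> {1..K}" \<sigma>]
  unfolding block_diag_abs_sum[OF \<open>K \<le> L\<close>] block_sq_sum[OF \<open>K \<le> L\<close>] by auto

lemma L1_bilinear_sum_square_le:
  assumes g: "bounded_measurable borel g" "bounded_measurable borel h"
    and centred: "(\<integral>x. g (X 1 x) \<partial>P) = 0" "(\<integral>x. h (X 1 x) \<partial>P) = 0"
  shows "(\<integral>x. \<bar>bilinear_sum \<sigma> ({1..K} \<times> {1..K}) g h x\<bar> \<partial>P)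
       \<le> 6 * sqrt (\<integral>x. (g (X 1 x))\<^sup>2 \<partial>P) * sqrt (\<integral>x. (h (X 1 x))\<^sup>2 \<partial>P)"
proof -
  have "sqrt (partial_sq_sum K) \<le> sqrt 4"
    by (intro real_sqrt_le_mono partial_sq_sum_le_4)
  then have "partial_trace K + 2 * sqrt (partial_sq_sum K) \<le> 6"
    using partial_trace_le_2[of K] by simp
  moreover have "partial_trace 0 = 0" "partial_sq_sum 0 = 0"
    unfolding partial_trace_def partial_sq_sum_def by simp_all
  ultimately show ?thesis
    using L1_bilinear_sum_block_le[OF le0 g centred, of K]
    by (simp add: mult_right_mono order_trans)
qed

lemma L1_quad_form_increment_le:
  assumes "K \<le> L" and \<phi>: "standardised \<phi>"
  shows "(\<integral>x. \<bar>quad_form \<phi> L x - quad_form \<phi> K x\<bar> \<partial>P)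
       \<le> partial_trace L - partial_trace K + 2 * sqrt (partial_sq_sum L - partial_sq_sum K)"
proof -
  have "quad_form \<phi> L x - quad_form \<phi> K x = bilinear_sum \<sigma> ({1..L} \<times> {1..L} - {1..K} \<times> {1..K}) \<phi> \<phi> x" for x
    unfolding quad_form_eq_bilinear_sum using square_subset[OF \<open>K \<le> L\<close>] by (simp add: bilinear_sum_diff)
  then show ?thesis
    using L1_bilinear_sum_block_le[OF \<open>K \<le> L\<close>, of \<phi> \<phi>] \<phi> unfolding standardised_def by simp
qed

lemma quad_form_L1_conv:
  assumes \<phi>: "standardised \<phi>"
  shows "\<exists>V. L1_conv P (quad_form \<phi>) V sequentially"
proof (rule L1_conv_Cauchy)
  show "integrable P (quad_form \<phi> K)" for K
    using \<phi> unfolding standardised_def by (simp add: integrable_quad_form)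
  have bound: "(\<integral>x. \<bar>quad_form \<phi> m x - quad_form \<phi> n x\<bar> \<partial>P)
      \<le> \<bar>partial_trace m - partial_trace n\<bar> + 2 * sqrt \<bar>partial_sq_sum m - partial_sq_sum n\<bar>" for m n
  proof (cases "n \<le> m")
    case True
    then show ?thesis
      using L1_quad_form_increment_le[OF True \<phi>] partial_trace_mono[OF True] partial_sq_sum_mono[OF True]
      by simp
  next
    case False
    then have "m \<le> n"
      by simp
    then show ?thesis
      using L1_quad_form_increment_le[OF \<open>m \<le> n\<close> \<phi>] partial_trace_mono[OF \<open>m \<le> n\<close>]
        partial_sq_sum_mono[OF \<open>m \<le> n\<close>]
      by (simp add: abs_minus_commute)
  qed
  fix e :: real assume "e > 0"
  obtain N1 where N1: "\<forall>m\<ge>N1. \<forall>n\<ge>N1. \<bar>partial_trace m - partial_trace n\<bar> < e / 2"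
    using CauchyD[OF partial_trace_Cauchy, of "e / 2"] \<open>e > 0\<close> by auto
  obtain N2 where N2: "\<forall>m\<ge>N2. \<forall>n\<ge>N2. \<bar>partial_sq_sum m - partial_sq_sum n\<bar> < (e / 4)\<^sup>2"
    using CauchyD[OF partial_sq_sum_Cauchy, of "(e / 4)\<^sup>2"] \<open>e > 0\<close> by auto
  have "(\<integral>x. \<bar>quad_form \<phi> m x - quad_form \<phi> n x\<bar> \<partial>P) < e" if "max N1 N2 \<le> m" "max N1 N2 \<le> n" for m n
  proof -
    have "sqrt \<bar>partial_sq_sum m - partial_sq_sum n\<bar> < sqrt ((e / 4)\<^sup>2)"
      using N2 that by (intro real_sqrt_less_mono) auto
    then have "sqrt \<bar>partial_sq_sum m - partial_sq_sum n\<bar> < e / 4"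
      using \<open>e > 0\<close> by simp
    moreover have "\<bar>partial_trace m - partial_trace n\<bar> < e / 2"
      using N1 that by auto
    ultimately show ?thesis
      using bound[of m n] by linarith
  qed
  then show "\<exists>N. \<forall>m\<ge>N. \<forall>n\<ge>N. (\<integral>x. \<bar>quad_form \<phi> m x - quad_form \<phi> n x\<bar> \<partial>P) < e"
    by blast
qed

lemma L1_quad_form_diff_le:
  assumes \<phi>: "standardised \<phi>" and \<psi>: "standardised \<psi>"
  shows "(\<integral>x. \<bar>quad_form \<phi> K x - quad_form \<psi> K x\<bar> \<partial>P)
       \<le> 12 * sqrt (\<integral>x. (\<phi> (X 1 x) - \<psi> (X 1 x))\<^sup>2 \<partial>P)"
proof -
  have b: "bounded_measurable borel \<phi>" "bounded_measurable borel \<psi>"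
    and centred: "(\<integral>x. \<phi> (X 1 x) \<partial>P) = 0" "(\<integral>x. \<psi> (X 1 x) \<partial>P) = 0"
    and unit: "(\<integral>x. (\<phi> (X 1 x))\<^sup>2 \<partial>P) = 1" "(\<integral>x. (\<psi> (X 1 x))\<^sup>2 \<partial>P) = 1"
    using \<phi> \<psi> unfolding standardised_def by auto
  define \<delta> where "\<delta> y = \<phi> y - \<psi> y" for y
  have b\<delta>: "bounded_measurable borel \<delta>"
    unfolding \<delta>_def[abs_def] by (intro bounded_measurable_diff b)
  have centred\<delta>: "(\<integral>x. \<delta> (X 1 x) \<partial>P) = 0"
    unfolding \<delta>_def using centred integrable_X[OF b(1)] integrable_X[OF b(2)] by simp
  define S1 where "S1 = bilinear_sum \<sigma> ({1..K} \<times> {1..K}) \<delta> \<phi>"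
  define S2 where "S2 = bilinear_sum \<sigma> ({1..K} \<times> {1..K}) \<psi> \<delta>"
  have split: "quad_form \<phi> K x - quad_form \<psi> K x = S1 x + S2 x" for x
    unfolding quad_form_eq_bilinear_sum S1_def S2_def bilinear_sum_def \<delta>_def
      sum_subtractf[symmetric] sum.distrib[symmetric]
    by (intro sum.cong refl) (auto simp: algebra_simps)
  have S_int: "integrable P S1" "integrable P S2"
    unfolding S1_def S2_def
    by (intro bounded_measurable_imp_integrable bounded_measurable_bilinear_sum b b\<delta> finite_SigmaI finite_atLeastAtMost)+
  have "(\<integral>x. \<bar>quad_form \<phi> K x - quad_form \<psi> K x\<bar> \<partial>P) \<le> (\<integral>x. \<bar>S1 x\<bar> + \<bar>S2 x\<bar> \<partial>P)"
    using S_int by (intro integral_mono) (simp_all add: split abs_triangle_ineq)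
  also have "\<dots> = (\<integral>x. \<bar>S1 x\<bar> \<partial>P) + (\<integral>x. \<bar>S2 x\<bar> \<partial>P)"
    using S_int by simp
  also have "\<dots> \<le> 6 * sqrt (\<integral>x. (\<delta> (X 1 x))\<^sup>2 \<partial>P) * 1 + 6 * 1 * sqrt (\<integral>x. (\<delta> (X 1 x))\<^sup>2 \<partial>P)"
    using L1_bilinear_sum_square_le[OF b\<delta> b(1) centred\<delta> centred(1), of K]
      L1_bilinear_sum_square_le[OF b(2) b\<delta> centred(2) centred\<delta>, of K]
    unfolding S1_def S2_def unit by (intro add_mono) simp_all
  finally show ?thesis
    unfolding \<delta>_def by simp
qed

end

section \<open>Truncation\<close>

locale unit_variance = prob_space P for P :: "'a measure" +
  fixes X :: "nat \<Rightarrow> 'a \<Rightarrow> real"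
  assumes X1_measurable[measurable]: "X 1 \<in> borel_measurable P"
    and X1_square_integrable: "integrable P (\<lambda>x. (X 1 x)\<^sup>2)"
    and X1_mean: "(\<integral>x. X 1 x \<partial>P) = 0"
    and X1_variance: "(\<integral>x. (X 1 x)\<^sup>2 \<partial>P) = 1"
begin

definition trunc :: "real \<Rightarrow> real \<Rightarrow> real" where
  "trunc M y = y * indicator {y. \<bar>y\<bar> \<le> M} y"

definition std_trunc :: "real \<Rightarrow> real \<Rightarrow> real" where
  "std_trunc M y = (trunc M y - trunc_mean P X M) / sqrt (trunc_var P X M)"

lemma bounded_measurable_X1:
  "bounded_measurable borel \<phi> \<Longrightarrow> bounded_measurable P (\<lambda>x. \<phi> (X 1 x))"
  by (rule bounded_measurable_compose[OF _ X1_measurable])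

lemma trunc_if: "trunc M y = (if \<bar>y\<bar> \<le> M then y else 0)"
  unfolding trunc_def by (simp add: indicator_def)

lemma trunc_measurable: "trunc M \<in> borel_measurable borel"
  unfolding trunc_if[abs_def] by measurable

lemma trunc_X1_measurable: "(\<lambda>x. trunc M (X 1 x)) \<in> borel_measurable P"
  by (rule measurable_compose[OF X1_measurable trunc_measurable])

lemma bounded_measurable_trunc: "bounded_measurable borel (trunc M)"
  unfolding bounded_measurable_def trunc_if by (auto intro!: exI[of _ "\<bar>M\<bar>"])

lemma bounded_measurable_std_trunc: "bounded_measurable borel (std_trunc M)"
  unfolding std_trunc_def[abs_def] divide_inverse
  by (intro bounded_measurable_intros bounded_measurable_trunc)

lemma trunc_std_eq: "trunc_std P X M = (\<lambda>s x. std_trunc M (X s x))"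
  unfolding trunc_std_def std_trunc_def trunc_def by (rule refl)

lemma trunc_mean_eq: "trunc_mean P X M = (\<integral>x. trunc M (X 1 x) \<partial>P)"
  unfolding trunc_mean_def trunc_def by (rule refl)

lemma trunc_var_eq: "trunc_var P X M = (\<integral>x. (trunc M (X 1 x) - trunc_mean P X M)\<^sup>2 \<partial>P)"
  unfolding trunc_var_def trunc_def by (rule refl)

lemma integrable_trunc: "integrable P (\<lambda>x. trunc M (X 1 x))"
  by (intro bounded_measurable_imp_integrable bounded_measurable_X1 bounded_measurable_trunc)

lemma integrable_trunc_square: "integrable P (\<lambda>x. (trunc M (X 1 x))\<^sup>2)"
  unfolding power2_eq_square
  by (intro bounded_measurable_imp_integrable bounded_measurable_mult bounded_measurable_X1
      bounded_measurable_trunc)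

lemma integrable_X1: "integrable P (X 1)"
  using square_integrable_imp_integrable[OF X1_measurable X1_square_integrable] .

lemma integrable_bounded_mult_X1:
  assumes "bounded_measurable P f"
  shows "integrable P (\<lambda>x. f x * X 1 x)"
proof -
  obtain B where B: "\<forall>x\<in>space P. \<bar>f x\<bar> \<le> B" and f: "f \<in> borel_measurable P"
    using assms unfolding bounded_measurable_def by auto
  show ?thesis
  proof (rule Bochner_Integration.integrable_bound)
    show "integrable P (\<lambda>x. B * \<bar>X 1 x\<bar>)"
      using integrable_X1 by auto
    show "AE x in P. norm (f x * X 1 x) \<le> norm (B * \<bar>X 1 x\<bar>)"
    proof (intro AE_I2)
      fix x assume "x \<in> space P"
      then have "\<bar>f x\<bar> * \<bar>X 1 x\<bar> \<le> B * \<bar>X 1 x\<bar>"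
        using B by (intro mult_right_mono) auto
      moreover have "B * \<bar>X 1 x\<bar> \<le> \<bar>B\<bar> * \<bar>X 1 x\<bar>"
        by (intro mult_right_mono) auto
      ultimately show "norm (f x * X 1 x) \<le> norm (B * \<bar>X 1 x\<bar>)"
        by (simp add: abs_mult)
    qed
  qed (rule borel_measurable_times[OF f X1_measurable])
qed

lemma std_trunc_standardised:
  assumes "trunc_var P X M > 0"
  shows "(\<integral>x. std_trunc M (X 1 x) \<partial>P) = 0" and "(\<integral>x. (std_trunc M (X 1 x))\<^sup>2 \<partial>P) = 1"
proof -
  define a where "a = trunc_mean P X M"
  have "(\<integral>x. std_trunc M (X 1 x) \<partial>P) = (\<integral>x. trunc M (X 1 x) - a \<partial>P) / sqrt (trunc_var P X M)"
    unfolding std_trunc_def a_def by simp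
  also have "\<dots> = 0"
    using integrable_trunc by (simp add: a_def trunc_mean_eq prob_space)
  finally show "(\<integral>x. std_trunc M (X 1 x) \<partial>P) = 0" .
  have "(\<integral>x. (std_trunc M (X 1 x))\<^sup>2 \<partial>P) = (\<integral>x. (trunc M (X 1 x) - a)\<^sup>2 \<partial>P) / trunc_var P X M"
    unfolding std_trunc_def a_def using assms by (simp add: power_divide)
  also have "\<dots> = 1"
    using assms unfolding a_def trunc_var_eq[of M, symmetric] by simp
  finally show "(\<integral>x. (std_trunc M (X 1 x))\<^sup>2 \<partial>P) = 1" .
qed

lemma trunc_var_eq_moments: "trunc_var P X M = (\<integral>x. (trunc M (X 1 x))\<^sup>2 \<partial>P) - (trunc_mean P X M)\<^sup>2"
proof -
  define a where "a = trunc_mean P X M"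
  have "trunc_var P X M = (\<integral>x. (trunc M (X 1 x))\<^sup>2 - 2 * a * trunc M (X 1 x) + a\<^sup>2 \<partial>P)"
    unfolding trunc_var_eq a_def[symmetric] by (simp add: power2_diff algebra_simps)
  also have "\<dots> = (\<integral>x. (trunc M (X 1 x))\<^sup>2 \<partial>P) - 2 * a * (\<integral>x. trunc M (X 1 x) \<partial>P) + a\<^sup>2"
    using integrable_trunc integrable_trunc_square by (simp add: prob_space)
  finally show ?thesis
    unfolding a_def trunc_mean_eq by (simp add: power2_eq_square)
qed

lemma tendsto_trunc_mean: "((\<lambda>M. trunc_mean P X M) \<longlongrightarrow> 0) at_top"
proof -
  have "((\<lambda>M. \<integral>x. trunc M (X 1 x) \<partial>P) \<longlongrightarrow> (\<integral>x. X 1 x \<partial>P)) at_top"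
  proof (rule integral_dominated_convergence_at_top[where w="\<lambda>x. \<bar>X 1 x\<bar>"])
    show "AE x in P. ((\<lambda>M. trunc M (X 1 x)) \<longlongrightarrow> X 1 x) at_top"
    proof (intro AE_I2 tendsto_eventually)
      fix x show "\<forall>\<^sub>F M in at_top. trunc M (X 1 x) = X 1 x"
        using eventually_ge_at_top[of "\<bar>X 1 x\<bar>"] by eventually_elim (simp add: trunc_if)
    qed
    show "\<forall>\<^sub>F M in at_top. AE x in P. norm (trunc M (X 1 x)) \<le> \<bar>X 1 x\<bar>"
      by (intro always_eventually allI AE_I2) (simp add: trunc_if)
    show "X 1 \<in> borel_measurable P"
      by (rule X1_measurable)
    show "(\<lambda>x. trunc M (X 1 x)) \<in> borel_measurable P" for M
      by (rule trunc_X1_measurable)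
    show "integrable P (\<lambda>x. \<bar>X 1 x\<bar>)"
      using integrable_X1 by (rule integrable_abs)
  qed
  then show ?thesis
    unfolding trunc_mean_eq X1_mean .
qed

lemma tendsto_trunc_second_moment: "((\<lambda>M. \<integral>x. (trunc M (X 1 x))\<^sup>2 \<partial>P) \<longlongrightarrow> 1) at_top"
proof -
  have "((\<lambda>M. \<integral>x. (trunc M (X 1 x))\<^sup>2 \<partial>P) \<longlongrightarrow> (\<integral>x. (X 1 x)\<^sup>2 \<partial>P)) at_top"
  proof (rule integral_dominated_convergence_at_top[where w="\<lambda>x. (X 1 x)\<^sup>2"])
    show "(\<lambda>x. (trunc M (X 1 x))\<^sup>2) \<in> borel_measurable P" for M
      by (rule borel_measurable_power[OF trunc_X1_measurable])
    show "(\<lambda>x. (X 1 x)\<^sup>2) \<in> borel_measurable P"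
      by (rule borel_measurable_power[OF X1_measurable])
    show "integrable P (\<lambda>x. (X 1 x)\<^sup>2)"
      by (rule X1_square_integrable)
    show "AE x in P. ((\<lambda>M. (trunc M (X 1 x))\<^sup>2) \<longlongrightarrow> (X 1 x)\<^sup>2) at_top"
    proof (intro AE_I2 tendsto_eventually)
      fix x show "\<forall>\<^sub>F M in at_top. (trunc M (X 1 x))\<^sup>2 = (X 1 x)\<^sup>2"
        using eventually_ge_at_top[of "\<bar>X 1 x\<bar>"] by eventually_elim (simp add: trunc_if)
    qed
    show "\<forall>\<^sub>F M in at_top. AE x in P. norm ((trunc M (X 1 x))\<^sup>2) \<le> (X 1 x)\<^sup>2"
      by (intro always_eventually allI AE_I2) (simp add: trunc_if)
  qed
  then show ?thesis
    unfolding X1_variance .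
qed

lemma tendsto_trunc_var: "((\<lambda>M. trunc_var P X M) \<longlongrightarrow> 1) at_top"
  unfolding trunc_var_eq_moments
  using tendsto_diff[OF tendsto_trunc_second_moment tendsto_power[OF tendsto_trunc_mean, of 2]] by simp

lemma eventually_trunc_var_pos: "\<forall>\<^sub>F M in at_top. trunc_var P X M > 0"
  using order_tendstoD(1)[OF tendsto_trunc_var, of 0] by simp

lemma integral_std_trunc_minus_X1_square:
  assumes "trunc_var P X M > 0"
  shows "(\<integral>x. (std_trunc M (X 1 x) - X 1 x)\<^sup>2 \<partial>P)
       = 2 - 2 * (\<integral>x. (trunc M (X 1 x))\<^sup>2 \<partial>P) / sqrt (trunc_var P X M)"
proof -
  define a where "a = trunc_mean P X M"
  define s where "s = sqrt (trunc_var P X M)"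
  have std_int: "integrable P (\<lambda>x. (std_trunc M (X 1 x))\<^sup>2)"
    unfolding power2_eq_square
    by (intro bounded_measurable_imp_integrable bounded_measurable_mult bounded_measurable_X1
        bounded_measurable_std_trunc)
  have std_X_int: "integrable P (\<lambda>x. std_trunc M (X 1 x) * X 1 x)"
    by (intro integrable_bounded_mult_X1 bounded_measurable_X1 bounded_measurable_std_trunc)
  have pointwise: "std_trunc M y * y = ((trunc M y)\<^sup>2 - a * y) / s" for y
    unfolding std_trunc_def a_def s_def by (simp add: trunc_if power2_eq_square left_diff_distrib)
  have "(\<integral>x. std_trunc M (X 1 x) * X 1 x \<partial>P) = (\<integral>x. (trunc M (X 1 x))\<^sup>2 - a * X 1 x \<partial>P) / s"
    unfolding pointwise by simp
  also have "\<dots> = (\<integral>x. (trunc M (X 1 x))\<^sup>2 \<partial>P) / s"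
    using Bochner_Integration.integral_diff[OF integrable_trunc_square integrable_mult_right[OF integrable_X1]]
      X1_mean by simp
  finally have cross: "(\<integral>x. std_trunc M (X 1 x) * X 1 x \<partial>P) = (\<integral>x. (trunc M (X 1 x))\<^sup>2 \<partial>P) / s" .
  have "(std_trunc M y - y)\<^sup>2 = (std_trunc M y)\<^sup>2 - 2 * (std_trunc M y * y) + y\<^sup>2" for y
    by (simp add: power2_eq_square algebra_simps)
  then have "(\<integral>x. (std_trunc M (X 1 x) - X 1 x)\<^sup>2 \<partial>P)
      = (\<integral>x. (std_trunc M (X 1 x))\<^sup>2 - 2 * (std_trunc M (X 1 x) * X 1 x) + (X 1 x)\<^sup>2 \<partial>P)"
    by simp
  also have "\<dots> = (\<integral>x. (std_trunc M (X 1 x))\<^sup>2 \<partial>P) - 2 * (\<integral>x. std_trunc M (X 1 x) * X 1 x \<partial>P)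
      + (\<integral>x. (X 1 x)\<^sup>2 \<partial>P)"
    using std_int std_X_int X1_square_integrable by simp
  finally show ?thesis
    unfolding cross std_trunc_standardised(2)[OF assms] X1_variance s_def by simp
qed

lemma tendsto_std_trunc_L2: "((\<lambda>M. \<integral>x. (std_trunc M (X 1 x) - X 1 x)\<^sup>2 \<partial>P) \<longlongrightarrow> 0) at_top"
proof -
  have "((\<lambda>M. 2 - 2 * (\<integral>x. (trunc M (X 1 x))\<^sup>2 \<partial>P) / sqrt (trunc_var P X M)) \<longlongrightarrow> 2 - 2 * 1 / sqrt 1) at_top"
    by (intro tendsto_diff tendsto_const tendsto_divide tendsto_mult tendsto_real_sqrt
        tendsto_trunc_second_moment tendsto_trunc_var) simp
  moreover have "\<forall>\<^sub>F M in at_top. 2 - 2 * (\<integral>x. (trunc M (X 1 x))\<^sup>2 \<partial>P) / sqrt (trunc_var P X M)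
      = (\<integral>x. (std_trunc M (X 1 x) - X 1 x)\<^sup>2 \<partial>P)"
    using eventually_trunc_var_pos by eventually_elim (rule integral_std_trunc_minus_X1_square[symmetric])
  ultimately have "((\<lambda>M. \<integral>x. (std_trunc M (X 1 x) - X 1 x)\<^sup>2 \<partial>P) \<longlongrightarrow> 2 - 2 * 1 / sqrt 1) at_top"
    by (rule Lim_transform_eventually)
  then show ?thesis
    by simp
qed

lemma integrable_std_trunc_minus_X1_square: "integrable P (\<lambda>x. (std_trunc M (X 1 x) - X 1 x)\<^sup>2)"
proof -
  have "integrable P (\<lambda>x. (std_trunc M (X 1 x))\<^sup>2 - 2 * (std_trunc M (X 1 x) * X 1 x) + (X 1 x)\<^sup>2)"
    unfolding power2_eq_square[of "std_trunc M _"]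
    by (intro Bochner_Integration.integrable_add Bochner_Integration.integrable_diff integrable_mult_right
        X1_square_integrable integrable_bounded_mult_X1 bounded_measurable_imp_integrable
        bounded_measurable_mult bounded_measurable_X1 bounded_measurable_std_trunc)
  then show ?thesis
    by (simp add: power2_eq_square algebra_simps)
qed

lemma std_trunc_L2_dist_le:
  "(\<integral>x. (std_trunc M (X 1 x) - std_trunc M' (X 1 x))\<^sup>2 \<partial>P)
     \<le> 2 * (\<integral>x. (std_trunc M (X 1 x) - X 1 x)\<^sup>2 \<partial>P) + 2 * (\<integral>x. (std_trunc M' (X 1 x) - X 1 x)\<^sup>2 \<partial>P)"
proof -
  have square_le: "(a - b)\<^sup>2 \<le> 2 * (a - c)\<^sup>2 + 2 * (b - c)\<^sup>2" for a b c :: real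
    using zero_le_power2[of "a + b - 2 * c"] by (simp add: power2_eq_square algebra_simps)
  have "(\<integral>x. (std_trunc M (X 1 x) - std_trunc M' (X 1 x))\<^sup>2 \<partial>P)
      \<le> (\<integral>x. 2 * (std_trunc M (X 1 x) - X 1 x)\<^sup>2 + 2 * (std_trunc M' (X 1 x) - X 1 x)\<^sup>2 \<partial>P)"
  proof (rule integral_mono)
    show "integrable P (\<lambda>x. (std_trunc M (X 1 x) - std_trunc M' (X 1 x))\<^sup>2)"
      unfolding power2_eq_square
      by (intro bounded_measurable_imp_integrable bounded_measurable_mult bounded_measurable_diff
          bounded_measurable_X1 bounded_measurable_std_trunc)
    show "integrable P (\<lambda>x. 2 * (std_trunc M (X 1 x) - X 1 x)\<^sup>2 + 2 * (std_trunc M' (X 1 x) - X 1 x)\<^sup>2)"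
      using integrable_std_trunc_minus_X1_square by simp
  qed (rule square_le)
  also have "\<dots> = 2 * (\<integral>x. (std_trunc M (X 1 x) - X 1 x)\<^sup>2 \<partial>P) + 2 * (\<integral>x. (std_trunc M' (X 1 x) - X 1 x)\<^sup>2 \<partial>P)"
    using integrable_std_trunc_minus_X1_square by simp
  finally show ?thesis .
qed

end

section \<open>Normal variance mixtures\<close>

lemma power2_sqrt_eq_abs: "(sqrt a)\<^sup>2 = \<bar>a\<bar>"
  by (metis abs_ge_zero power2_abs real_sqrt_abs' real_sqrt_pow2)

lemma prob_space_std_normal: "prob_space std_normal_distribution"
  using real_dist_normal_dist by (simp add: real_distribution_def)

lemma prob_space_normal_mix_pair:
  "prob_space P \<Longrightarrow> A \<in> borel_measurable P \<Longrightarrow> prob_space (distr P borel A \<Otimes>\<^sub>M std_normal_distribution)"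
  by (intro prob_space_pair prob_space.prob_space_distr prob_space_std_normal)

lemma real_distribution_normal_mix:
  "prob_space P \<Longrightarrow> A \<in> borel_measurable P \<Longrightarrow> real_distribution (normal_mix P A)"
  unfolding normal_mix_def by (intro prob_space.real_distribution_distr prob_space_normal_mix_pair) auto

text \<open>Since \<^term>\<open>sqrt a = - sqrt (- a)\<close> for negative a, the variance enters only
  through its absolute value.\<close>

lemma char_normal_mix:
  assumes P: "prob_space P" and A[measurable]: "A \<in> borel_measurable P"
  shows "char (normal_mix P A) t = complex_of_real (\<integral>x. exp (- (t\<^sup>2 * \<bar>A x\<bar>) / 2) \<partial>P)"
proof -
  let ?N = "std_normal_distribution" and ?\<mu> = "distr P borel A"
  have "pair_sigma_finite ?\<mu> ?N"
    by (intro pair_sigma_finite.intro prob_space_imp_sigma_finite prob_space.prob_space_distr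
        prob_space_std_normal P A)
  moreover interpret pair: prob_space "?\<mu> \<Otimes>\<^sub>M ?N"
    using P A by (rule prob_space_normal_mix_pair)
  have "integrable (?\<mu> \<Otimes>\<^sub>M ?N) (\<lambda>z. iexp (t * (case z of (a, w) \<Rightarrow> sqrt a * w)))"
    by (intro pair.integrable_const_bound[where B=1]) (auto simp: norm_exp_i_times)
  ultimately have "char (normal_mix P A) t = (CLINT a | ?\<mu>. CLINT w | ?N. iexp (t * (sqrt a * w)))"
    unfolding char_def normal_mix_def by (subst integral_distr) (auto dest: pair_sigma_finite.integral_fst')
  also have "\<dots> = (CLINT a | ?\<mu>. complex_of_real (exp (- (t\<^sup>2 * \<bar>a\<bar>) / 2)))"
  proof (intro Bochner_Integration.integral_cong refl)
    fix a
    have "(CLINT w | ?N. iexp (t * (sqrt a * w))) = char ?N (t * sqrt a)"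
      unfolding char_def by (simp add: mult.assoc)
    then show "(CLINT w | ?N. iexp (t * (sqrt a * w))) = complex_of_real (exp (- (t\<^sup>2 * \<bar>a\<bar>) / 2))"
      by (simp add: char_std_normal_distribution power_mult_distrib power2_sqrt_eq_abs)
  qed
  also have "\<dots> = complex_of_real (\<integral>x. exp (- (t\<^sup>2 * \<bar>A x\<bar>) / 2) \<partial>P)"
    by (simp add: integral_complex_of_real integral_distr)
  finally show ?thesis .
qed

lemma exp_neg_abs_Lipschitz:
  fixes c a b :: real
  assumes "0 \<le> c"
  shows "\<bar>exp (- (c * \<bar>a\<bar>)) - exp (- (c * \<bar>b\<bar>))\<bar> \<le> c * \<bar>a - b\<bar>"
proof -
  have exp_le: "exp v - exp u \<le> v - u" if "u \<le> v" "v \<le> 0" for u v :: real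
  proof -
    have "exp v - exp u = exp v * (1 - exp (u - v))"
      by (simp add: exp_diff algebra_simps)
    also have "\<dots> \<le> 1 - exp (u - v)"
      using that by (intro mult_left_le_one_le) auto
    also have "\<dots> \<le> v - u"
      using exp_ge_add_one_self[of "u - v"] by linarith
    finally show ?thesis .
  qed
  have exp_neg_le: "\<bar>exp (- x) - exp (- y)\<bar> \<le> \<bar>x - y\<bar>" if "0 \<le> x" "0 \<le> y" for x y :: real
  proof (cases "x \<le> y")
    case True
    then show ?thesis
      using exp_le[of "- y" "- x"] that by simp
  next
    case False
    then show ?thesis
      using exp_le[of "- x" "- y"] that by simp
  qed
  have "\<bar>exp (- (c * \<bar>a\<bar>)) - exp (- (c * \<bar>b\<bar>))\<bar> \<le> \<bar>c * \<bar>a\<bar> - c * \<bar>b\<bar>\<bar>"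
    using assms by (intro exp_neg_le) auto
  also have "\<dots> = c * \<bar>\<bar>a\<bar> - \<bar>b\<bar>\<bar>"
    using assms by (simp add: abs_mult right_diff_distrib[symmetric])
  also have "\<dots> \<le> c * \<bar>a - b\<bar>"
    using assms by (intro mult_left_mono abs_triangle_ineq3) auto
  finally show ?thesis .
qed

lemma (in prob_space) integral_exp_neg_abs_diff_le:
  fixes A B :: "'a \<Rightarrow> real"
  assumes A: "A \<in> borel_measurable M" and B: "B \<in> borel_measurable M"
    and int: "integrable M (\<lambda>x. A x - B x)" and "0 \<le> c"
  shows "\<bar>(\<integral>x. exp (- (c * \<bar>A x\<bar>)) \<partial>M) - (\<integral>x. exp (- (c * \<bar>B x\<bar>)) \<partial>M)\<bar>
       \<le> c * (\<integral>x. \<bar>A x - B x\<bar> \<partial>M)"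
proof -
  have exp_int: "integrable M (\<lambda>x. exp (- (c * \<bar>W x\<bar>)))" if [measurable]: "W \<in> borel_measurable M" for W
  proof (rule integrable_const_bound[where B=1])
    show "AE x in M. norm (exp (- (c * \<bar>W x\<bar>))) \<le> 1"
      using \<open>0 \<le> c\<close> by (intro AE_I2) simp
  qed measurable
  have "\<bar>(\<integral>x. exp (- (c * \<bar>A x\<bar>)) \<partial>M) - (\<integral>x. exp (- (c * \<bar>B x\<bar>)) \<partial>M)\<bar>
      \<le> (\<integral>x. \<bar>exp (- (c * \<bar>A x\<bar>)) - exp (- (c * \<bar>B x\<bar>))\<bar> \<partial>M)"
    using exp_int[OF A] exp_int[OF B] by (simp add: integral_abs_bound flip: Bochner_Integration.integral_diff)
  also have "\<dots> \<le> (\<integral>x. c * \<bar>A x - B x\<bar> \<partial>M)"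
    using exp_int[OF A] exp_int[OF B] int \<open>0 \<le> c\<close> by (intro integral_mono exp_neg_abs_Lipschitz) auto
  finally show ?thesis
    by simp
qed

text \<open>Convergence in distribution is checked on characteristic functions (Levy's continuity
  theorem); those of normal variance mixtures depend Lipschitz-continuously on the variance in L1.\<close>

lemma weak_conv_normal_mix:
  assumes P: "prob_space P" and A: "\<And>M. A M \<in> borel_measurable P" and V: "V \<in> borel_measurable P"
    and conv: "L1_conv P A V at_top"
  shows "weak_conv_at_top (\<lambda>M. normal_mix P (A M)) (normal_mix P V)"
  unfolding weak_conv_at_top_def
proof (intro allI impI)
  fix Ms :: "nat \<Rightarrow> real" assume Ms: "filterlim Ms at_top sequentially"
  interpret prob_space P by (rule P)
  have V_int: "integrable P V" and A_int: "\<forall>\<^sub>F k in sequentially. integrable P (A (Ms k))"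
    and lim: "(\<lambda>k. \<integral>x. \<bar>A (Ms k) x - V x\<bar> \<partial>P) \<longlonglongrightarrow> 0"
    using conv Ms unfolding L1_conv_def by (auto intro: eventually_compose_filterlim filterlim_compose)
  show "weak_conv_m (\<lambda>k. normal_mix P (A (Ms k))) (normal_mix P V)"
  proof (rule levy_continuity)
    fix t :: real
    define c where "c = t\<^sup>2 / 2"
    have "\<forall>\<^sub>F k in sequentially.
        norm ((\<integral>x. exp (- (c * \<bar>A (Ms k) x\<bar>)) \<partial>P) - (\<integral>x. exp (- (c * \<bar>V x\<bar>)) \<partial>P))
          \<le> c * (\<integral>x. \<bar>A (Ms k) x - V x\<bar> \<partial>P)"
      using A_int
    proof eventually_elim
      case (elim k)
      have "0 \<le> c"
        unfolding c_def by simp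
      with integral_exp_neg_abs_diff_le[OF A V Bochner_Integration.integrable_diff[OF elim V_int]]
      show ?case
        by simp
    qed
    moreover have "(\<lambda>k. c * (\<integral>x. \<bar>A (Ms k) x - V x\<bar> \<partial>P)) \<longlonglongrightarrow> 0"
      using tendsto_mult_right_zero[OF lim, of c] by simp
    ultimately have "(\<lambda>k. (\<integral>x. exp (- (c * \<bar>A (Ms k) x\<bar>)) \<partial>P) - (\<integral>x. exp (- (c * \<bar>V x\<bar>)) \<partial>P)) \<longlonglongrightarrow> 0"
      by (rule Lim_null_comparison)
    then have "(\<lambda>k. complex_of_real (\<integral>x. exp (- (c * \<bar>A (Ms k) x\<bar>)) \<partial>P))
        \<longlonglongrightarrow> complex_of_real (\<integral>x. exp (- (c * \<bar>V x\<bar>)) \<partial>P)"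
      by (intro tendsto_of_real) (simp add: LIM_zero_cancel)
    then show "(\<lambda>k. char (normal_mix P (A (Ms k))) t) \<longlonglongrightarrow> char (normal_mix P V) t"
      unfolding char_normal_mix[OF P A] char_normal_mix[OF P V] c_def by simp
  qed (use real_distribution_normal_mix P A V in auto)
qed

lemma integrable_square_normal_mix:
  assumes P: "prob_space P" and A[measurable]: "A \<in> borel_measurable P" and "integrable P A"
  shows "integrable (normal_mix P A) (\<lambda>y. y\<^sup>2)"
proof (rule integrableI_bounded)
  let ?N = "std_normal_distribution" and ?\<mu> = "distr P borel A"
  show "(\<lambda>y. y\<^sup>2) \<in> borel_measurable (normal_mix P A)"
    unfolding normal_mix_def by simp
  have "sigma_finite_measure ?N"
    by (intro prob_space_imp_sigma_finite prob_space_std_normal)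
  have second_moment: "(\<integral>\<^sup>+w. ennreal (w\<^sup>2) \<partial>?N) = 1"
    using std_normal_distribution_even_moments[of 1] by (subst nn_integral_eq_integral) auto
  have "(\<integral>\<^sup>+y. ennreal (norm (y\<^sup>2)) \<partial>normal_mix P A)
      = (\<integral>\<^sup>+a. \<integral>\<^sup>+w. ennreal ((sqrt a * w)\<^sup>2) \<partial>?N \<partial>?\<mu>)"
    unfolding normal_mix_def
    by (simp add: nn_integral_distr sigma_finite_measure.nn_integral_fst[OF \<open>sigma_finite_measure ?N\<close>, symmetric]
        split_beta')
  also have "\<dots> = (\<integral>\<^sup>+a. ennreal \<bar>a\<bar> \<partial>?\<mu>)"
  proof (intro nn_integral_cong)
    fix a
    have "(\<integral>\<^sup>+w. ennreal ((sqrt a * w)\<^sup>2) \<partial>?N) = (\<integral>\<^sup>+w. ennreal \<bar>a\<bar> * ennreal (w\<^sup>2) \<partial>?N)"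
      by (intro nn_integral_cong) (simp add: power_mult_distrib power2_sqrt_eq_abs ennreal_mult)
    then show "(\<integral>\<^sup>+w. ennreal ((sqrt a * w)\<^sup>2) \<partial>?N) = ennreal \<bar>a\<bar>"
      by (simp add: nn_integral_cmult second_moment)
  qed
  also have "\<dots> = ennreal (\<integral>x. \<bar>A x\<bar> \<partial>P)"
    using \<open>integrable P A\<close> by (simp add: nn_integral_distr nn_integral_eq_integral)
  finally show "(\<integral>\<^sup>+y. ennreal (norm (y\<^sup>2)) \<partial>normal_mix P A) < \<infinity>"
    by simp
qed

section \<open>The limiting variance\<close>

locale truncated_quadratic_form = iid_quadratic_form P X \<sigma> + unit_variance P X
  for P :: "'a measure" and X \<sigma>
begin

lemma standardised_std_trunc: "0 < trunc_var P X M \<Longrightarrow> standardised (std_trunc M)"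
  unfolding standardised_def using bounded_measurable_std_trunc std_trunc_standardised by auto

text \<open>Where the truncated variance vanishes the value is irrelevant; it is fixed to 0 so that
  every V_M is integrable, as the convergence in distribution along arbitrary M \<rightarrow> \<infinity> requires.\<close>

definition trunc_quad_limit :: "real \<Rightarrow> 'a \<Rightarrow> real" where
  "trunc_quad_limit M = (if 0 < trunc_var P X M
     then (SOME V. L1_conv P (quad_form (std_trunc M)) V sequentially) else (\<lambda>_. 0))"

lemma L1_conv_trunc_quad_limit:
  assumes "0 < trunc_var P X M"
  shows "L1_conv P (quad_form (std_trunc M)) (trunc_quad_limit M) sequentially"
  using someI_ex[OF quad_form_L1_conv[OF standardised_std_trunc[OF assms]]] assms
  unfolding trunc_quad_limit_def by simp

lemma integrable_trunc_quad_limit: "integrable P (trunc_quad_limit M)"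
  using L1_conv_trunc_quad_limit[of M] unfolding L1_conv_def by (auto simp: trunc_quad_limit_def)

lemma trunc_quad_limit_nonneg: "AE x in P. 0 \<le> trunc_quad_limit M x"
proof (cases "0 < trunc_var P X M")
  case True
  show ?thesis
    using L1_conv_trunc_quad_limit[OF True] quad_form_nonneg by (intro L1_conv_AE_nonneg) auto
qed (simp add: trunc_quad_limit_def)

lemma L1_trunc_quad_limit_diff_le:
  assumes "0 < trunc_var P X M" "0 < trunc_var P X M'"
  shows "(\<integral>x. \<bar>trunc_quad_limit M x - trunc_quad_limit M' x\<bar> \<partial>P)
       \<le> 12 * sqrt (2 * (\<integral>x. (std_trunc M (X 1 x) - X 1 x)\<^sup>2 \<partial>P) + 2 * (\<integral>x. (std_trunc M' (X 1 x) - X 1 x)\<^sup>2 \<partial>P))"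
proof -
  have "(\<integral>x. \<bar>trunc_quad_limit M x - trunc_quad_limit M' x\<bar> \<partial>P)
      \<le> 12 * sqrt (\<integral>x. (std_trunc M (X 1 x) - std_trunc M' (X 1 x))\<^sup>2 \<partial>P)"
    using L1_quad_form_diff_le[OF standardised_std_trunc standardised_std_trunc, OF assms]
    by (intro L1_conv_dist_le[OF L1_conv_trunc_quad_limit L1_conv_trunc_quad_limit, OF assms]) auto
  also have "\<dots> \<le> 12 * sqrt (2 * (\<integral>x. (std_trunc M (X 1 x) - X 1 x)\<^sup>2 \<partial>P) + 2 * (\<integral>x. (std_trunc M' (X 1 x) - X 1 x)\<^sup>2 \<partial>P))"
    by (intro mult_left_mono real_sqrt_le_mono std_trunc_L2_dist_le) simp
  finally show ?thesis .
qed

lemma trunc_quad_limit_Cauchy: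
  assumes "0 < e"
  shows "\<exists>M0. \<forall>M\<ge>M0. \<forall>M'\<ge>M0. (\<integral>x. \<bar>trunc_quad_limit M x - trunc_quad_limit M' x\<bar> \<partial>P) < e"
proof -
  define \<delta> where "\<delta> = (e / 48)\<^sup>2"
  have "0 < \<delta>"
    unfolding \<delta>_def using assms by simp
  have "\<forall>\<^sub>F M in at_top. 0 < trunc_var P X M \<and> (\<integral>x. (std_trunc M (X 1 x) - X 1 x)\<^sup>2 \<partial>P) < \<delta>"
    using eventually_trunc_var_pos order_tendstoD(2)[OF tendsto_std_trunc_L2 \<open>0 < \<delta>\<close>]
    by (rule eventually_conj)
  then obtain M0 where M0: "\<And>M. M0 \<le> M \<Longrightarrow> 0 < trunc_var P X M \<and> (\<integral>x. (std_trunc M (X 1 x) - X 1 x)\<^sup>2 \<partial>P) < \<delta>"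
    unfolding eventually_at_top_linorder by blast
  have "(\<integral>x. \<bar>trunc_quad_limit M x - trunc_quad_limit M' x\<bar> \<partial>P) < e" if "M0 \<le> M" "M0 \<le> M'" for M M'
  proof -
    have "(\<integral>x. \<bar>trunc_quad_limit M x - trunc_quad_limit M' x\<bar> \<partial>P) \<le> 12 * sqrt (2 * \<delta> + 2 * \<delta>)"
      using M0[OF that(1)] M0[OF that(2)]
      by (intro order_trans[OF L1_trunc_quad_limit_diff_le]) (auto intro!: real_sqrt_le_mono)
    also have "12 * sqrt (2 * \<delta> + 2 * \<delta>) = e / 2"
      unfolding \<delta>_def using assms by (simp add: real_sqrt_mult)
    finally show ?thesis
      using assms by simp
  qed
  then show ?thesis
    by blast
qed

lemma trunc_quad_limit_converges:
  obtains V where "L1_conv P trunc_quad_limit V at_top" and "AE x in P. 0 \<le> V x"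
    and "weak_conv_at_top (\<lambda>M. normal_mix P (trunc_quad_limit M)) (normal_mix P V)"
    and "integrable (normal_mix P V) (\<lambda>y. y\<^sup>2)"
proof -
  obtain V where V: "L1_conv P trunc_quad_limit V at_top"
    using L1_conv_Cauchy_at_top[where f = trunc_quad_limit, OF integrable_trunc_quad_limit
        trunc_quad_limit_Cauchy] by blast
  then have V_int: "integrable P V"
    unfolding L1_conv_def by blast
  show ?thesis
  proof (rule that[OF V])
    show "AE x in P. 0 \<le> V x"
      using V trunc_quad_limit_nonneg by (intro L1_conv_AE_nonneg) auto
    show "weak_conv_at_top (\<lambda>M. normal_mix P (trunc_quad_limit M)) (normal_mix P V)"
      using prob_space_axioms borel_measurable_integrable[OF integrable_trunc_quad_limit]
        borel_measurable_integrable[OF V_int] V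
      by (rule weak_conv_normal_mix)
    show "integrable (normal_mix P V) (\<lambda>y. y\<^sup>2)"
      using prob_space_axioms borel_measurable_integrable[OF V_int] V_int
      by (rule integrable_square_normal_mix)
  qed
qed

end

theorem lemma3p17:
  fixes P :: "'a measure" and X :: "nat \<Rightarrow> 'a \<Rightarrow> real"
    and G :: "nat \<Rightarrow> nat \<Rightarrow> nat \<Rightarrow> bool" and \<sigma> :: "nat \<Rightarrow> nat \<Rightarrow> real"
  assumes "prob_space P"
    and "\<And>i. X i \<in> borel_measurable P"
    and "prob_space.indep_vars P (\<lambda>_. borel) X {1..}"
    and "\<And>i. 1 \<le> i \<Longrightarrow> distr P borel (X i) = distr P borel (X 1)"
    and "integrable P (\<lambda>x. (X 1 x)\<^sup>2)"
    and "(\<integral>x. X 1 x \<partial>P) = 0"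
    and "(\<integral>x. (X 1 x)\<^sup>2 \<partial>P) = 1"
    and "\<And>n. in_script_G n (G n)"
    and "filterlim (\<lambda>n. num_edges n (G n)) at_top sequentially"
    and "codegree_condition G \<sigma>"
  shows "\<exists>(VM :: real \<Rightarrow> 'a \<Rightarrow> real) (V :: 'a \<Rightarrow> real).
           (\<forall>M. trunc_var P X M > 0 \<longrightarrow>
               L1_conv P (quad_partial \<sigma> (trunc_std P X M)) (VM M) sequentially
             \<and> (AE x in P. VM M x \<ge> 0))
         \<and> L1_conv P VM V at_top
         \<and> (AE x in P. V x \<ge> 0)
         \<and> weak_conv_at_top (\<lambda>M. normal_mix P (VM M)) (normal_mix P V)
         \<and> integrable (normal_mix P V) (\<lambda>y. y\<^sup>2)"
proof -
  interpret graph: graph_sequence G \<sigma>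
    by (rule graph_sequence.intro) (fact assms(8), fact assms(10))
  have "iid_sequence P X"
    by (intro iid_sequence.intro iid_sequence_axioms.intro assms(1-4))
  then have "iid_quadratic_form P X \<sigma>"
    by (intro iid_quadratic_form.intro iid_quadratic_form_axioms.intro graph.sigma_sym graph.sigma_nonneg
        graph.sigma_le_diag graph.sigma_trace_le_2 graph.sigma_psd)
  moreover have "unit_variance P X"
    by (intro unit_variance.intro unit_variance_axioms.intro assms(1,2,5-7))
  ultimately interpret truncated_quadratic_form P X \<sigma>
    by (rule truncated_quadratic_form.intro)
  obtain V where "L1_conv P trunc_quad_limit V at_top" "AE x in P. 0 \<le> V x"
    "weak_conv_at_top (\<lambda>M. normal_mix P (trunc_quad_limit M)) (normal_mix P V)"
    "integrable (normal_mix P V) (\<lambda>y. y\<^sup>2)"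
    by (rule trunc_quad_limit_converges)
  moreover have "L1_conv P (quad_partial \<sigma> (trunc_std P X M)) (trunc_quad_limit M) sequentially"
    if "0 < trunc_var P X M" for M
    unfolding trunc_std_eq using L1_conv_trunc_quad_limit[OF that] .
  ultimately show ?thesis
    using trunc_quad_limit_nonneg by blast
qed

end
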